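(* Let $\mathbf T=\{\mathbf t=(t_1,t_2)\in\mathbb R_+^2:0\le t_2\le t_1\}$ with the metric $m(\mathbf t,\mathbf s)=|t_1-s_1|\vee|t_2-s_2|$, and let $X=\{X(\mathbf t),\mathbf t\in\mathbf T\}$ satisfy conditions $(D_1)$–$(D_3)$ below with constants $\beta,\gamma,\delta>0$, $C(\beta,\gamma)$, $C(\delta)$. For $0\le a<b$ put $\mathbf T_{a,b}=\{\mathbf t\in\mathbf T: a\le t_1\le b\}$. Then for any $\theta\in(0,1)$, any $\lambda>0$ and any $\kappa$ with $0<\kappa<1\wedge 2\gamma$, $$E\exp\Big\{\lambda\sup_{\mathbf t\in\mathbf T_{a,b}}|X(\mathbf t)|\Big\}\le 2\widetilde Q(\lambda,\theta),\qquad \widetilde Q(\lambda,\theta)=\exp\Big\{\frac{\lambda^2(b^\delta C(\delta))^2}{2(1-\theta)^2}+\frac{2\lambda}{1-\theta}\,b^{\delta+\kappa_1}\frac{C_2}{\theta^{\kappa/(2\gamma)}\kappa^{1/2}}\Big\},$$ where $\kappa_1=\frac{\kappa}{2}\big(1+\frac{\beta}{\gamma}-\frac{\delta}{\gamma}\big)$ and $C_2=\frac{2^{(1-\kappa)/2}}{1-\frac{\kappa}{2\gamma}}\,C(\delta)^{1-\frac{\kappa}{2\gamma}}\,C(\beta,\gamma)^{\frac{\kappa}{2\gamma}}$.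
   Context: Conditions on a random process $X$ indexed by $\mathbf T$: $(D_1)$ $X$ is a centered Gaussian process on $\mathbf T$, separable on the metric space $(\mathbf T,m)$. $(D_2)$ There exist $\beta>0,\gamma>0$ and a constant $C(\beta,\gamma)$ such that for all $\mathbf t,\mathbf s\in\mathbf T$: $\big(E(X(\mathbf t)-X(\mathbf s))^2\big)^{1/2}\le C(\beta,\gamma)(t_1\vee s_1)^\beta\, m(\mathbf t,\mathbf s)^\gamma$. $(D_3)$ There exist $\delta>0$ and a constant $C(\delta)$ such that for all $\mathbf t\in\mathbf T$: $\big(E X(\mathbf t)^2\big)^{1/2}\le C(\delta)t_1^\delta$. *)

theory Defs
  imports "HOL-Probability.Probability"
begin

definition Tset :: "(real \<times> real) set" where
  "Tset = {(t1, t2). 0 \<le> t2 \<and> t2 \<le> t1}"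

definition mdist :: "real \<times> real \<Rightarrow> real \<times> real \<Rightarrow> real" where
  "mdist t s = max \<bar>fst t - fst s\<bar> \<bar>snd t - snd s\<bar>"

definition Tab :: "real \<Rightarrow> real \<Rightarrow> (real \<times> real) set" where
  "Tab a b = {t \<in> Tset. a \<le> fst t \<and> fst t \<le> b}"

definition centered_normal_rv :: "'a measure \<Rightarrow> ('a \<Rightarrow> real) \<Rightarrow> bool" where
  "centered_normal_rv M Y \<longleftrightarrow> Y \<in> borel_measurable M \<and>
     (\<exists>\<sigma>\<ge>0. if \<sigma> = 0 then (AE \<omega> in M. Y \<omega> = 0)
              else distributed M lborel Y (normal_density 0 \<sigma>))"

text \<open>Centered Gaussian process on S: all finite linear combinations of the
  coordinates are centered normal (i.e. the finite-dimensional distributions are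
  centered jointly Gaussian).\<close>

definition centered_gaussian_process ::
  "'a measure \<Rightarrow> 'i set \<Rightarrow> ('i \<Rightarrow> 'a \<Rightarrow> real) \<Rightarrow> bool" where
  "centered_gaussian_process M S X \<longleftrightarrow>
     (\<forall>F c. finite F \<longrightarrow> F \<subseteq> S \<longrightarrow>
        centered_normal_rv M (\<lambda>\<omega>. \<Sum>t\<in>F. c t * X t \<omega>))"

definition separable_process ::
  "'a measure \<Rightarrow> 'i set \<Rightarrow> ('i \<Rightarrow> 'i \<Rightarrow> real) \<Rightarrow> ('i \<Rightarrow> 'a \<Rightarrow> real) \<Rightarrow> bool" where
  "separable_process M S d X \<longleftrightarrow>
     (\<exists>D N. countable D \<and> D \<subseteq> S \<and> N \<in> null_sets M \<and>
        (\<forall>t\<in>S. \<forall>e>0. \<exists>s\<in>D. d s t < e) \<and>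
        (\<forall>\<omega>\<in>space M - N. \<forall>t\<in>S. \<exists>s::nat \<Rightarrow> 'i. (\<forall>n. s n \<in> D) \<and>
            (\<lambda>n. d (s n) t) \<longlonglongrightarrow> 0 \<and> (\<lambda>n. X (s n) \<omega>) \<longlonglongrightarrow> X t \<omega>))"

end

theory Submission
  imports Defs
begin

(*
  Exponential moment of the supremum of a Gaussian field with Hoelder increments,
  proved by Dudley-type chaining with exponential moments.

  - A centered normal W of standard deviation at most s has E exp(mu W) <= exp(mu^2 s^2 / 2);
    by a union bound the maximum of N such variables has E exp(mu max) <= N exp(mu^2 s^2 / 2).
  - Exponential moments of a sum of variables are controlled by a generalised Hoelder
    inequality with weights a_k, sum a_k <= 1.  At the k-th chaining level a weight
    a_k <= (1 - theta) theta^k is chosen to balance ln N_k against the variance term.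
  - For a finite F inside [0,B]^2 the representatives of square grids of side
    u_k = (sigma theta^(k+1) / L)^(1/gamma) form a chain whose k-th links have standard
    deviation <= sigma theta^k and at most (floor(B/u_k) + 1)^2 elements; summing the level
    contributions gives the bound chaining_bound for E exp(lam max_F X), and by symmetry
    twice that bound for E exp(lam max_F |X|).
  - Separability and monotone convergence pass from finite subsets of the separant to T_{a,b}.
    To get strictly positive constants and a margin around T_{a,b}, the quantities b, C(delta),
    C(beta,gamma) are first increased by eta > 0, and eta -> 0 at the end.
*)

(* Completing the square: tilting the N(0, sigma^2) density by exp(mu x) gives a shifted
   normal density. *)
lemma normal_density_mult_exp:
  assumes "\<sigma> > 0"
  shows "normal_density 0 \<sigma> x * exp (\<mu> * x) = exp (\<mu>^2 * \<sigma>^2 / 2) * normal_density (\<mu> * \<sigma>^2) \<sigma> x"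
proof -
  have "-(x - 0)\<^sup>2 / (2 * \<sigma>\<^sup>2) + \<mu> * x = \<mu>^2 * \<sigma>^2 / 2 + (-(x - \<mu> * \<sigma>^2)\<^sup>2 / (2 * \<sigma>\<^sup>2))"
    using assms by (simp add: field_simps power2_eq_square)
  then show ?thesis unfolding normal_density_def
    by (simp add: exp_add[symmetric] mult_ac)
qed

lemma centered_normal_exp_moment_le:
  assumes P: "prob_space M" and G: "centered_normal_rv M W"
    and s: "sqrt (\<integral>\<omega>. (W \<omega>)^2 \<partial>M) \<le> s"
  shows "(\<integral>\<^sup>+\<omega>. ennreal (exp (\<mu> * W \<omega>)) \<partial>M) \<le> ennreal (exp (\<mu>^2 * s^2 / 2))"
proof -
  interpret prob_space M by fact
  obtain \<sigma> where \<sigma>0: "\<sigma> \<ge> 0" and H: "if \<sigma> = 0 then (AE \<omega> in M. W \<omega> = 0)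
              else distributed M lborel W (normal_density 0 \<sigma>)"
    using G unfolding centered_normal_rv_def by blast
  show ?thesis
  proof (cases "\<sigma> = 0")
    case True
    then have ae: "AE \<omega> in M. W \<omega> = 0" using H by simp
    have "(\<integral>\<^sup>+\<omega>. ennreal (exp (\<mu> * W \<omega>)) \<partial>M) = (\<integral>\<^sup>+\<omega>. 1 \<partial>M)"
      by (rule nn_integral_cong_AE) (use ae in auto)
    also have "\<dots> = 1" by (simp add: emeasure_space_1)
    also have "\<dots> \<le> ennreal (exp (\<mu>^2 * s^2 / 2))" by simp
    finally show ?thesis .
  next
    case False
    then have sp: "\<sigma> > 0" using \<sigma>0 by simp
    have D: "distributed M lborel W (normal_density 0 \<sigma>)" using H False by simp
    have "variance W = \<sigma>^2" by (rule normal_distributed_variance[OF sp D])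
    moreover have "expectation W = 0" by (rule normal_distributed_expectation[OF sp D])
    ultimately have "(\<integral>\<omega>. (W \<omega>)^2 \<partial>M) = \<sigma>^2" by simp
    then have "\<sigma> \<le> s" using s sp by simp
    have "(\<integral>\<^sup>+\<omega>. ennreal (exp (\<mu> * W \<omega>)) \<partial>M)
        = (\<integral>\<^sup>+x. ennreal (normal_density 0 \<sigma> x) * ennreal (exp (\<mu> * x)) \<partial>lborel)"
      by (rule distributed_nn_integral[OF D, symmetric]) simp
    also have "\<dots> = (\<integral>\<^sup>+x. ennreal (exp (\<mu>^2 * \<sigma>^2 / 2)) * ennreal (normal_density (\<mu> * \<sigma>^2) \<sigma> x) \<partial>lborel)"
      by (rule nn_integral_cong) (simp add: ennreal_mult[symmetric] normal_density_mult_exp[OF sp])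
    also have "\<dots> = ennreal (exp (\<mu>^2 * \<sigma>^2 / 2)) * (\<integral>\<^sup>+x. ennreal (normal_density (\<mu> * \<sigma>^2) \<sigma> x) \<partial>lborel)"
      by (rule nn_integral_cmult) simp
    also have "(\<integral>\<^sup>+x. ennreal (normal_density (\<mu> * \<sigma>^2) \<sigma> x) \<partial>lborel) = 1"
    proof -
      have "emeasure (density lborel (\<lambda>x. ennreal (normal_density (\<mu> * \<sigma>^2) \<sigma> x))) UNIV = 1"
        using prob_space.emeasure_space_1[OF prob_space_normal_density[OF sp]] by simp
      then show ?thesis by (simp add: emeasure_density)
    qed
    finally show ?thesis
      using \<open>\<sigma> \<le> s\<close> sp by (simp add: power_mono mult_left_mono divide_right_mono)
  qed
qed

lemma gaussian_process_combination:
  assumes G: "centered_gaussian_process M S X" and u: "u \<in> S" and v: "v \<in> S"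
  shows "centered_normal_rv M (\<lambda>\<omega>. c1 * X u \<omega> + c2 * X v \<omega>)"
proof -
  have H: "\<And>F c. finite F \<Longrightarrow> F \<subseteq> S \<Longrightarrow> centered_normal_rv M (\<lambda>\<omega>. \<Sum>t\<in>F. c t * X t \<omega>)"
    using G unfolding centered_gaussian_process_def by simp
  define c where "c t = (if t = u then c1 + (if u = v then c2 else 0) else c2)" for t
  have "centered_normal_rv M (\<lambda>\<omega>. \<Sum>t\<in>{u, v}. c t * X t \<omega>)"
    by (rule H) (use u v in auto)
  moreover have "(\<lambda>\<omega>. \<Sum>t\<in>{u, v}. c t * X t \<omega>) = (\<lambda>\<omega>. c1 * X u \<omega> + c2 * X v \<omega>)"
    by (cases "u = v") (auto simp: fun_eq_iff c_def algebra_simps)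
  ultimately show ?thesis by simp
qed

(* Jensen's inequality for exp with sub-probability weights; the missing mass sits at 0. *)
lemma exp_convex_combination_le:
  fixes a y :: "'i \<Rightarrow> real"
  assumes "finite I" "\<And>i. i \<in> I \<Longrightarrow> a i \<ge> 0" "(\<Sum>i\<in>I. a i) \<le> 1"
  shows "exp (\<Sum>i\<in>I. a i * y i) \<le> (\<Sum>i\<in>I. a i * exp (y i)) + (1 - (\<Sum>i\<in>I. a i))"
proof -
  define S where "S = insert None (Some ` I)"
  define a' where "a' = (\<lambda>j. case j of None \<Rightarrow> 1 - (\<Sum>i\<in>I. a i) | Some i \<Rightarrow> a i)"
  define y' where "y' = (\<lambda>j. case j of None \<Rightarrow> 0 | Some i \<Rightarrow> y i)"
  have fin: "finite S" using assms(1) by (simp add: S_def)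
  have sumS: "\<And>f. (\<Sum>j\<in>S. f j) = f None + (\<Sum>i\<in>I. f (Some i))"
    unfolding S_def using assms(1) by (simp add: sum.reindex)
  have "exp (\<Sum>j\<in>S. a' j *\<^sub>R y' j) \<le> (\<Sum>j\<in>S. a' j * exp (y' j))"
  proof (rule convex_on_sum[OF fin _ exp_convex])
    show "S \<noteq> {}" by (simp add: S_def)
    show "sum a' S = 1" by (simp add: sumS a'_def)
    show "\<And>i. i \<in> S \<Longrightarrow> 0 \<le> a' i" using assms by (auto simp: S_def a'_def)
  qed auto
  then show ?thesis by (simp add: sumS a'_def y'_def)
qed

(* Pointwise form of the generalised Hoelder inequality: writing z_i = t_i + a_i ((z_i - t_i)/a_i)
   and applying Jensen. *)
lemma exp_sum_le_weighted:
  fixes z t a :: "'i \<Rightarrow> real"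
  assumes fin: "finite I" and apos: "\<And>i. i \<in> I \<Longrightarrow> a i > 0" and asum: "(\<Sum>i\<in>I. a i) \<le> 1"
  shows "exp (\<Sum>i\<in>I. z i)
    \<le> exp (\<Sum>i\<in>I. t i) * ((\<Sum>i\<in>I. a i / exp (t i / a i) * exp (z i / a i)) + (1 - (\<Sum>i\<in>I. a i)))"
proof -
  have "(\<Sum>i\<in>I. z i) = (\<Sum>i\<in>I. t i + a i * ((z i - t i) / a i))"
    by (rule sum.cong) (use apos in \<open>auto dest: apos simp: less_irrefl\<close>)
  then have "exp (\<Sum>i\<in>I. z i) = exp (\<Sum>i\<in>I. t i) * exp (\<Sum>i\<in>I. a i * ((z i - t i) / a i))"
    by (simp add: sum.distrib exp_add)
  also have "\<dots> \<le> exp (\<Sum>i\<in>I. t i) * ((\<Sum>i\<in>I. a i * exp ((z i - t i) / a i)) + (1 - (\<Sum>i\<in>I. a i)))"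
    by (rule mult_left_mono[OF exp_convex_combination_le]) (use fin apos asum in \<open>auto simp: less_imp_le\<close>)
  also have "(\<Sum>i\<in>I. a i * exp ((z i - t i) / a i)) = (\<Sum>i\<in>I. a i / exp (t i / a i) * exp (z i / a i))"
    by (rule sum.cong) (simp_all add: diff_divide_distrib exp_diff)
  finally show ?thesis .
qed

lemma nn_integral_exp_sum_le:
  fixes Z :: "'i \<Rightarrow> 'a \<Rightarrow> real" and a T :: "'i \<Rightarrow> real"
  assumes P: "prob_space M" and fin: "finite I" and apos: "\<And>i. i \<in> I \<Longrightarrow> a i > 0"
    and asum: "(\<Sum>i\<in>I. a i) \<le> 1"
    and Zm: "\<And>i. i \<in> I \<Longrightarrow> Z i \<in> borel_measurable M"
    and B: "\<And>i. i \<in> I \<Longrightarrow> (\<integral>\<^sup>+\<omega>. ennreal (exp (Z i \<omega> / a i)) \<partial>M) \<le> ennreal (exp (T i / a i))"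
  shows "(\<integral>\<^sup>+\<omega>. ennreal (exp (\<Sum>i\<in>I. Z i \<omega>)) \<partial>M) \<le> ennreal (exp (\<Sum>i\<in>I. T i))"
proof -
  interpret prob_space M by fact
  define c where "c i = a i / exp (T i / a i)" for i
  define g where "g \<omega> = (\<Sum>i\<in>I. ennreal (c i) * ennreal (exp (Z i \<omega> / a i))) + ennreal (1 - (\<Sum>i\<in>I. a i))" for \<omega>
  have c0: "i \<in> I \<Longrightarrow> c i \<ge> 0" for i using apos[of i] by (simp add: c_def)
  have pw: "ennreal (exp (\<Sum>i\<in>I. Z i \<omega>)) \<le> ennreal (exp (\<Sum>i\<in>I. T i)) * g \<omega>" for \<omega>
  proof -
    have "(\<Sum>i\<in>I. ennreal (c i) * ennreal (exp (Z i \<omega> / a i))) = (\<Sum>i\<in>I. ennreal (c i * exp (Z i \<omega> / a i)))"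
      by (rule sum.cong) (auto simp: ennreal_mult c0)
    also have "\<dots> = ennreal (\<Sum>i\<in>I. c i * exp (Z i \<omega> / a i))"
      by (rule sum_ennreal) (simp add: c0)
    finally have "(\<Sum>i\<in>I. ennreal (c i) * ennreal (exp (Z i \<omega> / a i))) = ennreal (\<Sum>i\<in>I. c i * exp (Z i \<omega> / a i))" .
    moreover have "ennreal (\<Sum>i\<in>I. c i * exp (Z i \<omega> / a i)) + ennreal (1 - (\<Sum>i\<in>I. a i))
        = ennreal ((\<Sum>i\<in>I. c i * exp (Z i \<omega> / a i)) + (1 - (\<Sum>i\<in>I. a i)))"
      by (rule ennreal_plus[symmetric]) (use asum c0 in \<open>auto intro!: sum_nonneg\<close>)
    ultimately have "g \<omega> = ennreal ((\<Sum>i\<in>I. c i * exp (Z i \<omega> / a i)) + (1 - (\<Sum>i\<in>I. a i)))"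
      unfolding g_def by simp
    then show ?thesis
      using exp_sum_le_weighted[OF fin apos asum, where z = "\<lambda>i. Z i \<omega>" and t = T]
      by (simp add: c_def ennreal_mult'[symmetric] ennreal_leI)
  qed
  have gm: "g \<in> borel_measurable M" unfolding g_def using Zm by (auto intro!: borel_measurable_sum)
  have "(\<integral>\<^sup>+\<omega>. g \<omega> \<partial>M) = (\<Sum>i\<in>I. ennreal (c i) * (\<integral>\<^sup>+\<omega>. ennreal (exp (Z i \<omega> / a i)) \<partial>M)) + ennreal (1 - (\<Sum>i\<in>I. a i))"
    unfolding g_def using Zm
    by (subst nn_integral_add) (auto simp: nn_integral_sum nn_integral_cmult emeasure_space_1 intro!: borel_measurable_sum)
  also have "\<dots> \<le> (\<Sum>i\<in>I. ennreal (c i) * ennreal (exp (T i / a i))) + ennreal (1 - (\<Sum>i\<in>I. a i))"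
    by (intro add_mono sum_mono mult_left_mono B) auto
  also have "(\<Sum>i\<in>I. ennreal (c i) * ennreal (exp (T i / a i))) = ennreal (\<Sum>i\<in>I. a i)"
    using apos by (simp add: c_def ennreal_mult[symmetric] sum_ennreal less_imp_le)
  also have "\<dots> + ennreal (1 - (\<Sum>i\<in>I. a i)) = 1"
    using asum apos by (simp add: ennreal_plus[symmetric] less_imp_le sum_nonneg del: ennreal_plus)
  finally have ig: "(\<integral>\<^sup>+\<omega>. g \<omega> \<partial>M) \<le> 1" by simp
  have "(\<integral>\<^sup>+\<omega>. ennreal (exp (\<Sum>i\<in>I. Z i \<omega>)) \<partial>M) \<le> (\<integral>\<^sup>+\<omega>. ennreal (exp (\<Sum>i\<in>I. T i)) * g \<omega> \<partial>M)"
    by (rule nn_integral_mono) (rule pw)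
  also have "\<dots> = ennreal (exp (\<Sum>i\<in>I. T i)) * (\<integral>\<^sup>+\<omega>. g \<omega> \<partial>M)"
    by (rule nn_integral_cmult[OF gm])
  also have "\<dots> \<le> ennreal (exp (\<Sum>i\<in>I. T i))"
    using mult_left_mono[OF ig, of "ennreal (exp (\<Sum>i\<in>I. T i))"] by simp
  finally show ?thesis .
qed

lemma nn_integral_exp_Max_le:
  fixes W :: "'i \<Rightarrow> 'a \<Rightarrow> real"
  assumes fin: "finite V" and ne: "V \<noteq> {}" and mu: "\<mu> \<ge> 0" and C: "C \<ge> 0"
    and Wm: "\<And>v. v \<in> V \<Longrightarrow> W v \<in> borel_measurable M"
    and B: "\<And>v. v \<in> V \<Longrightarrow> (\<integral>\<^sup>+\<omega>. ennreal (exp (\<mu> * W v \<omega>)) \<partial>M) \<le> ennreal C"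
  shows "(\<integral>\<^sup>+\<omega>. ennreal (exp (\<mu> * Max ((\<lambda>v. W v \<omega>) ` V))) \<partial>M) \<le> ennreal (real (card V) * C)"
proof -
  have pw: "ennreal (exp (\<mu> * Max ((\<lambda>v. W v \<omega>) ` V))) \<le> (\<Sum>v\<in>V. ennreal (exp (\<mu> * W v \<omega>)))" for \<omega>
  proof -
    have "Max ((\<lambda>v. W v \<omega>) ` V) \<in> (\<lambda>v. W v \<omega>) ` V"
      by (rule Max_in) (use fin ne in auto)
    then obtain v where v: "v \<in> V" "Max ((\<lambda>v. W v \<omega>) ` V) = W v \<omega>" by auto
    have "ennreal (exp (\<mu> * W v \<omega>)) \<le> (\<Sum>v\<in>V. ennreal (exp (\<mu> * W v \<omega>)))"
      by (rule member_le_sum) (use v fin in auto)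
    then show ?thesis using v by simp
  qed
  have "(\<integral>\<^sup>+\<omega>. ennreal (exp (\<mu> * Max ((\<lambda>v. W v \<omega>) ` V))) \<partial>M) \<le> (\<integral>\<^sup>+\<omega>. (\<Sum>v\<in>V. ennreal (exp (\<mu> * W v \<omega>))) \<partial>M)"
    by (rule nn_integral_mono) (rule pw)
  also have "\<dots> = (\<Sum>v\<in>V. (\<integral>\<^sup>+\<omega>. ennreal (exp (\<mu> * W v \<omega>)) \<partial>M))"
    by (rule nn_integral_sum) (use Wm in auto)
  also have "\<dots> \<le> (\<Sum>v\<in>V. ennreal C)"
    by (rule sum_mono) (rule B)
  also have "\<dots> = ennreal (real (card V) * C)"
    using C by (simp add: ennreal_mult' ennreal_of_nat_eq_real_of_nat)
  finally show ?thesis .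
qed

(* The optimal
   a = lam s / sqrt(2 ln n) is capped at q. *)
lemma level_weight_exists:
  fixes Z :: "'a \<Rightarrow> real" and n :: nat
  assumes n: "n \<ge> 1" and s: "s > 0" and la: "lam > 0" and q: "q > 0"
    and mg: "\<And>\<mu>. \<mu> \<ge> 0 \<Longrightarrow> (\<integral>\<^sup>+\<omega>. ennreal (exp (\<mu> * Z \<omega>)) \<partial>M) \<le> ennreal (real n * exp (\<mu>^2 * s^2 / 2))"
  shows "\<exists>a. 0 < a \<and> a \<le> q \<and> (\<integral>\<^sup>+\<omega>. ennreal (exp (lam * Z \<omega> / a)) \<partial>M)
            \<le> ennreal (exp ((lam * s * sqrt (2 * ln (real n)) + lam^2 * s^2 / (2 * q)) / a))"
proof -
  define T where "T = lam * s * sqrt (2 * ln (real n)) + lam^2 * s^2 / (2 * q)"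
  have ln0: "ln (real n) \<ge> 0" using n by simp
  have key: "\<exists>a. 0 < a \<and> a \<le> q \<and> a * ln (real n) + lam^2 * s^2 / (2 * a) \<le> T"
  proof (cases "ln (real n) = 0")
    case True
    then show ?thesis by (intro exI[of _ q]) (simp add: T_def q)
  next
    case False
    then have lp: "ln (real n) > 0" using ln0 by simp
    define w where "w = sqrt (2 * ln (real n))"
    have wp: "w > 0" using lp by (simp add: w_def)
    have w2: "ln (real n) = w^2 / 2" using lp by (simp add: w_def)
    define a0 where "a0 = lam * s / w"
    have a0p: "a0 > 0" using la s wp by (simp add: a0_def)
    have e0: "a0 * ln (real n) + lam^2 * s^2 / (2 * a0) = lam * s * w"
      using wp la s unfolding a0_def w2 by (simp add: field_simps power2_eq_square)
    show ?thesis
    proof (cases "a0 \<le> q")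
      case True
      have "lam^2 * s^2 / (2 * q) \<ge> 0" using q by simp
      then show ?thesis using True a0p e0 by (intro exI[of _ a0]) (simp add: T_def w_def[symmetric])
    next
      case False
      have "q * ln (real n) \<le> a0 * ln (real n)" using False lp by simp
      also have "a0 * ln (real n) = lam * s * w / 2"
        using wp la s unfolding a0_def w2 by (simp add: field_simps power2_eq_square)
      finally have "q * ln (real n) \<le> lam * s * w / 2" .
      moreover have "0 < lam * s * w" using la s wp by simp
      ultimately have "q * ln (real n) \<le> lam * s * w" by linarith
      then show ?thesis using q by (intro exI[of _ q]) (simp add: T_def w_def[symmetric])
    qed
  qed
  then obtain a where a: "0 < a" "a \<le> q" "a * ln (real n) + lam^2 * s^2 / (2 * a) \<le> T" by blast
  have "(\<integral>\<^sup>+\<omega>. ennreal (exp (lam * Z \<omega> / a)) \<partial>M) = (\<integral>\<^sup>+\<omega>. ennreal (exp ((lam / a) * Z \<omega>)) \<partial>M)"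
    by simp
  also have "\<dots> \<le> ennreal (real n * exp ((lam / a)^2 * s^2 / 2))"
    by (rule mg) (use la a in simp)
  also have "real n * exp ((lam / a)^2 * s^2 / 2) = exp ((a * ln (real n) + lam^2 * s^2 / (2 * a)) / a)"
  proof -
    have e: "(a * ln (real n) + lam^2 * s^2 / (2 * a)) / a = ln (real n) + (lam / a)^2 * s^2 / 2"
      using a(1) by (simp add: add_divide_distrib power_divide power2_eq_square)
    have "real n = exp (ln (real n))" using n by simp
    then show ?thesis unfolding e exp_add by simp
  qed
  also have "ennreal \<dots> \<le> ennreal (exp (T / a))"
    using a by (intro ennreal_leI) (simp add: divide_right_mono)
  finally show ?thesis using a unfolding T_def by blast
qed

(* A chain is a sequence of finite sets R 0, R 1, ... with links p (Suc k) : R (Suc k) -> R k. *)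
definition chain_link :: "(nat \<Rightarrow> 'i \<Rightarrow> 'i) \<Rightarrow> ('i \<Rightarrow> 'a \<Rightarrow> real) \<Rightarrow> nat \<Rightarrow> 'i \<Rightarrow> 'a \<Rightarrow> real" where
  "chain_link p X k v \<omega> = (if k = 0 then X v \<omega> else X v \<omega> - X (p k v) \<omega>)"

lemma chain_link_simps:
  "chain_link p X 0 v = X v" "chain_link p X (Suc k) v = (\<lambda>\<omega>. X v \<omega> - X (p (Suc k) v) \<omega>)"
  by (simp_all add: fun_eq_iff chain_link_def)

definition chain_increment ::
  "(nat \<Rightarrow> 'i set) \<Rightarrow> (nat \<Rightarrow> 'i \<Rightarrow> 'i) \<Rightarrow> ('i \<Rightarrow> 'a \<Rightarrow> real) \<Rightarrow> nat \<Rightarrow> 'a \<Rightarrow> real" where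
  "chain_increment R p X k \<omega> = Max ((\<lambda>v. chain_link p X k v \<omega>) ` R k)"

lemma chain_telescope_le:
  fixes X :: "'i \<Rightarrow> 'a \<Rightarrow> real"
  assumes fin: "\<And>k. k \<le> n \<Longrightarrow> finite (R k)"
    and link: "\<And>k v. k < n \<Longrightarrow> v \<in> R (Suc k) \<Longrightarrow> p (Suc k) v \<in> R k"
  shows "j \<le> n \<Longrightarrow> v \<in> R j \<Longrightarrow> X v \<omega> \<le> (\<Sum>k\<le>j. chain_increment R p X k \<omega>)"
proof (induction j arbitrary: v)
  case 0
  then show ?case using fin[of 0] by (simp add: chain_increment_def chain_link_def)
next
  case (Suc j)
  have "X v \<omega> = X (p (Suc j) v) \<omega> + chain_link p X (Suc j) v \<omega>"
    by (simp add: chain_link_def)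
  also have "\<dots> \<le> (\<Sum>k\<le>j. chain_increment R p X k \<omega>) + chain_increment R p X (Suc j) \<omega>"
  proof (rule add_mono)
    show "X (p (Suc j) v) \<omega> \<le> (\<Sum>k\<le>j. chain_increment R p X k \<omega>)"
      using Suc.prems by (intro Suc.IH link) auto
    show "chain_link p X (Suc j) v \<omega> \<le> chain_increment R p X (Suc j) \<omega>"
      unfolding chain_increment_def using Suc.prems fin[of "Suc j"] by auto
  qed
  finally show ?case by simp
qed

lemma chaining_exp_moment_le:
  fixes X :: "'i \<Rightarrow> 'a \<Rightarrow> real" and R :: "nat \<Rightarrow> 'i set" and s q :: "nat \<Rightarrow> real"
  assumes P: "prob_space M"
    and fin: "\<And>k. k \<le> n \<Longrightarrow> finite (R k)" and ne: "\<And>k. k \<le> n \<Longrightarrow> R k \<noteq> {}"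
    and link: "\<And>k v. k < n \<Longrightarrow> v \<in> R (Suc k) \<Longrightarrow> p (Suc k) v \<in> R k"
    and gauss: "\<And>k v. k \<le> n \<Longrightarrow> v \<in> R k \<Longrightarrow> centered_normal_rv M (chain_link p X k v)"
    and sd: "\<And>k v. k \<le> n \<Longrightarrow> v \<in> R k \<Longrightarrow> sqrt (\<integral>\<omega>. (chain_link p X k v \<omega>)^2 \<partial>M) \<le> s k"
    and s: "\<And>k. s k > 0" and q: "\<And>k. q k > 0" and qsum: "(\<Sum>k\<le>n. q k) \<le> 1"
    and la: "lam > 0"
  shows "(\<integral>\<^sup>+\<omega>. ennreal (exp (lam * Max ((\<lambda>v. X v \<omega>) ` R n))) \<partial>M)
    \<le> ennreal (exp (\<Sum>k\<le>n. lam * s k * sqrt (2 * ln (real (card (R k)))) + lam^2 * (s k)^2 / (2 * q k)))"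
proof -
  define Y where "Y = chain_increment R p X"
  define T where "T k = lam * s k * sqrt (2 * ln (real (card (R k)))) + lam^2 * (s k)^2 / (2 * q k)" for k
  have link_meas: "chain_link p X k v \<in> borel_measurable M" if "k \<le> n" "v \<in> R k" for k v
    using gauss[OF that] by (simp add: centered_normal_rv_def)
  have Y_meas: "Y k \<in> borel_measurable M" if "k \<le> n" for k
  proof -
    have "(\<lambda>\<omega>. Max ((\<lambda>v. chain_link p X k v \<omega>) ` R k)) \<in> borel_measurable M"
      by (rule borel_measurable_Max) (use fin[OF that] link_meas[OF that] in auto)
    then show ?thesis by (simp add: Y_def chain_increment_def[abs_def])
  qed
  have level: "\<exists>a. 0 < a \<and> a \<le> q k \<and> (\<integral>\<^sup>+\<omega>. ennreal (exp (lam * Y k \<omega> / a)) \<partial>M) \<le> ennreal (exp (T k / a))"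
    if k: "k \<le> n" for k
  proof -
    have "card (R k) \<ge> 1" using fin[OF k] ne[OF k] by (simp add: Suc_le_eq card_gt_0_iff)
    moreover have "(\<integral>\<^sup>+\<omega>. ennreal (exp (\<mu> * Y k \<omega>)) \<partial>M) \<le> ennreal (real (card (R k)) * exp (\<mu>^2 * (s k)^2 / 2))"
      if "\<mu> \<ge> 0" for \<mu>
      unfolding Y_def chain_increment_def
      using centered_normal_exp_moment_le[OF P gauss[OF k] sd[OF k]]
      by (intro nn_integral_exp_Max_le fin[OF k] ne[OF k] that link_meas[OF k]) auto
    ultimately show ?thesis
      using level_weight_exists[OF _ s la q, where Z = "Y k" and M = M] by (simp add: T_def)
  qed
  then obtain a where a: "\<And>k. k \<le> n \<Longrightarrow> 0 < a k \<and> a k \<le> q k \<and>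
      (\<integral>\<^sup>+\<omega>. ennreal (exp (lam * Y k \<omega> / a k)) \<partial>M) \<le> ennreal (exp (T k / a k))"
    by metis
  have asum: "(\<Sum>k\<le>n. a k) \<le> 1"
    using sum_mono[of "{..n}" a q] a qsum by fastforce
  have sum_bound: "(\<integral>\<^sup>+\<omega>. ennreal (exp (\<Sum>k\<le>n. lam * Y k \<omega>)) \<partial>M) \<le> ennreal (exp (\<Sum>k\<le>n. T k))"
    by (rule nn_integral_exp_sum_le[OF P _ _ asum]) (use a Y_meas in auto)
  have max_le_sum: "lam * Max ((\<lambda>v. X v \<omega>) ` R n) \<le> (\<Sum>k\<le>n. lam * Y k \<omega>)" for \<omega>
  proof -
    have "Max ((\<lambda>v. X v \<omega>) ` R n) \<in> (\<lambda>v. X v \<omega>) ` R n" by (rule Max_in) (use fin ne in auto)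
    then obtain v where v: "v \<in> R n" "Max ((\<lambda>v. X v \<omega>) ` R n) = X v \<omega>" by auto
    have "X v \<omega> \<le> (\<Sum>k\<le>n. Y k \<omega>)"
      unfolding Y_def by (rule chain_telescope_le[where n = n and R = R and p = p, OF fin link]) (use v in auto)
    then show ?thesis using v la by (simp add: sum_distrib_left[symmetric])
  qed
  have "(\<integral>\<^sup>+\<omega>. ennreal (exp (lam * Max ((\<lambda>v. X v \<omega>) ` R n))) \<partial>M)
      \<le> (\<integral>\<^sup>+\<omega>. ennreal (exp (\<Sum>k\<le>n. lam * Y k \<omega>)) \<partial>M)"
    by (rule nn_integral_mono) (use max_le_sum in \<open>simp add: ennreal_leI\<close>)
  also note sum_bound
  finally show ?thesis unfolding T_def .
qed

definition grid_cell :: "real \<Rightarrow> real \<times> real \<Rightarrow> int \<times> int" where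
  "grid_cell u t = (\<lfloor>fst t / u\<rfloor>, \<lfloor>snd t / u\<rfloor>)"

definition grid_rep :: "(real \<times> real) set \<Rightarrow> real \<Rightarrow> real \<times> real \<Rightarrow> real \<times> real" where
  "grid_rep F u t = (SOME s. s \<in> F \<and> grid_cell u s = grid_cell u t)"

lemma grid_rep:
  assumes "t \<in> F"
  shows "grid_rep F u t \<in> F" "grid_cell u (grid_rep F u t) = grid_cell u t"
proof -
  have "grid_rep F u t \<in> F \<and> grid_cell u (grid_rep F u t) = grid_cell u t"
    unfolding grid_rep_def by (rule someI[of _ t]) (use assms in auto)
  then show "grid_rep F u t \<in> F" "grid_cell u (grid_rep F u t) = grid_cell u t" by auto
qed

lemma floor_same_close:
  fixes x y u :: real
  assumes "u > 0" "\<lfloor>x / u\<rfloor> = \<lfloor>y / u\<rfloor>"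
  shows "\<bar>x - y\<bar> < u"
proof -
  have "\<bar>x / u - y / u\<bar> < 1"
    using assms(2) of_int_floor_le[of "x/u"] of_int_floor_le[of "y/u"]
      real_of_int_floor_add_one_gt[of "x/u"] real_of_int_floor_add_one_gt[of "y/u"] by linarith
  then have "\<bar>(x - y) / u\<bar> < 1" by (simp add: diff_divide_distrib)
  then show ?thesis using assms(1) by (simp add: abs_divide)
qed

lemma mdist_grid_rep_less:
  assumes "u > 0" "t \<in> F"
  shows "mdist t (grid_rep F u t) < u"
proof -
  have "\<lfloor>fst t / u\<rfloor> = \<lfloor>fst (grid_rep F u t) / u\<rfloor>" "\<lfloor>snd t / u\<rfloor> = \<lfloor>snd (grid_rep F u t) / u\<rfloor>"
    using grid_rep(2)[OF assms(2), of u] by (auto simp: grid_cell_def)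
  then show ?thesis using floor_same_close[OF assms(1)] by (simp add: mdist_def)
qed

lemma card_grid_rep_le:
  assumes fin: "finite F" and u: "u > 0" and B: "B \<ge> 0"
    and FB: "\<And>t. t \<in> F \<Longrightarrow> 0 \<le> fst t \<and> fst t \<le> B \<and> 0 \<le> snd t \<and> snd t \<le> B"
  shows "real (card (grid_rep F u ` F)) \<le> (of_int \<lfloor>B / u\<rfloor> + 1)^2"
proof -
  define m where "m = \<lfloor>B / u\<rfloor>"
  have m0: "m \<ge> 0" using u B by (simp add: m_def)
  have cells: "grid_cell u ` F \<subseteq> {0..m} \<times> {0..m}"
  proof
    fix c assume "c \<in> grid_cell u ` F"
    then obtain t where t: "t \<in> F" "c = grid_cell u t" by auto
    have "fst t / u \<le> B / u" "snd t / u \<le> B / u" using FB[OF t(1)] u by (auto intro: divide_right_mono)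
    then have "\<lfloor>fst t / u\<rfloor> \<le> m" "\<lfloor>snd t / u\<rfloor> \<le> m" unfolding m_def by (auto intro: floor_mono)
    moreover have "\<lfloor>fst t / u\<rfloor> \<ge> 0" "\<lfloor>snd t / u\<rfloor> \<ge> 0" using FB[OF t(1)] u by auto
    ultimately show "c \<in> {0..m} \<times> {0..m}" using t by (auto simp: grid_cell_def)
  qed
  have "grid_rep F u ` F = (\<lambda>c. SOME s. s \<in> F \<and> grid_cell u s = c) ` (grid_cell u ` F)"
    by (simp add: grid_rep_def image_image)
  then have "card (grid_rep F u ` F) \<le> card (grid_cell u ` F)"
    by (simp only:) (rule card_image_le, use fin in simp)
  also have "\<dots> \<le> card ({0..m} \<times> {0..m})" by (rule card_mono[OF _ cells]) simp
  also have "\<dots> = nat (m + 1) * nat (m + 1)" by (simp add: card_cartesian_product)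
  finally have "real (card (grid_rep F u ` F)) \<le> real (nat (m + 1) * nat (m + 1))"
    by (simp only: of_nat_le_iff)
  also have "\<dots> = (of_int m + 1)^2" using m0 by (simp add: power2_eq_square)
  finally show ?thesis by (simp add: m_def)
qed

lemma ln_le_powr:
  fixes y \<kappa> :: real
  assumes y: "y > 0" and k: "\<kappa> > 0"
  shows "ln y \<le> y powr \<kappa> / (\<kappa> * exp 1)"
proof -
  have lx: "ln x \<le> x / exp 1" if "x > 0" for x :: real
  proof -
    have "1 + (ln x - 1) \<le> exp (ln x - 1)" by (rule exp_ge_add_one_self)
    also have "\<dots> = x / exp 1" using that by (simp add: exp_diff)
    finally show ?thesis by simp
  qed
  have "ln (y powr \<kappa>) = \<kappa> * ln y" by (rule ln_powr)
  then have "ln y = ln (y powr \<kappa>) / \<kappa>" using k by simp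
  also have "\<dots> \<le> (y powr \<kappa> / exp 1) / \<kappa>"
    using lx[of "y powr \<kappa>"] y k by (intro divide_right_mono) auto
  finally show ?thesis by (simp add: mult.commute)
qed

lemma sqrt_ln_grid_count_le:
  fixes n z \<kappa> :: real
  assumes n: "n \<ge> 1" and nz: "n \<le> (of_int \<lfloor>z\<rfloor> + 1)^2" and z: "z > 0" and k: "\<kappa> > 0"
  shows "sqrt (2 * ln n) \<le> 2 powr (1 + \<kappa>/2) * z powr (\<kappa>/2) / sqrt (\<kappa> * exp 1)"
proof -
  have fl0: "of_int \<lfloor>z\<rfloor> \<ge> (0::real)" using z by simp
  have lnb: "ln (of_int \<lfloor>z\<rfloor> + 1) \<le> 2 powr \<kappa> * z powr \<kappa> / (\<kappa> * exp 1)"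
  proof (cases "z < 1")
    case True
    then have "\<lfloor>z\<rfloor> = 0" using z by (simp add: floor_eq_iff)
    then show ?thesis using k by simp
  next
    case False
    have "of_int \<lfloor>z\<rfloor> + 1 \<le> 2 * z" using False of_int_floor_le[of z] by linarith
    moreover have "0 < of_int \<lfloor>z\<rfloor> + (1::real)" using fl0 by linarith
    ultimately have "ln (of_int \<lfloor>z\<rfloor> + 1) \<le> ln (2 * z)" using z by (subst ln_le_cancel_iff) auto
    also have "\<dots> \<le> (2 * z) powr \<kappa> / (\<kappa> * exp 1)" by (rule ln_le_powr) (use z k in auto)
    also have "(2 * z) powr \<kappa> = 2 powr \<kappa> * z powr \<kappa>" using z by (simp add: powr_mult)
    finally show ?thesis .
  qed
  have "ln n \<le> ln ((of_int \<lfloor>z\<rfloor> + 1)^2)" using n nz fl0 by (subst ln_le_cancel_iff) auto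
  also have "\<dots> = 2 * ln (of_int \<lfloor>z\<rfloor> + 1)" using fl0 by (simp add: ln_realpow)
  finally have "2 * ln n \<le> 4 * (2 powr \<kappa> * z powr \<kappa> / (\<kappa> * exp 1))" using lnb by linarith
  then have "sqrt (2 * ln n) \<le> sqrt (4 * (2 powr \<kappa> * z powr \<kappa> / (\<kappa> * exp 1)))" by simp
  also have "\<dots> = 2 powr (1 + \<kappa>/2) * z powr (\<kappa>/2) / sqrt (\<kappa> * exp 1)"
  proof -
    have a: "sqrt (2 powr \<kappa>) = 2 powr (\<kappa>/2)" by (simp add: powr_half_sqrt[symmetric] powr_powr)
    have b: "sqrt (z powr \<kappa>) = z powr (\<kappa>/2)" using z by (simp add: powr_half_sqrt[symmetric] powr_powr)
    have c: "2 powr (1 + \<kappa>/2) = 2 * 2 powr (\<kappa>/2)" by (simp add: powr_add)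
    show ?thesis by (simp add: real_sqrt_mult real_sqrt_divide a b c)
  qed
  finally show ?thesis .
qed

(* Convexity of c -> theta^c on [0,1]. *)
lemma theta_powr_le:
  fixes \<theta> c :: real
  assumes "0 < \<theta>" "\<theta> < 1" "0 \<le> c" "c \<le> 1"
  shows "\<theta> powr c \<le> 1 - c * (1 - \<theta>)"
proof -
  have "exp ((1 - c) *\<^sub>R 0 + c *\<^sub>R ln \<theta>) \<le> (1 - c) * exp 0 + c * exp (ln \<theta>)"
    by (rule convex_onD[OF exp_convex]) (use assms in auto)
  then show ?thesis using assms by (simp add: powr_def algebra_simps)
qed

lemma geo_powr_sum:
  fixes \<theta> e :: real
  assumes "0 < \<theta>" "\<theta> < 1" "0 < e" "e \<le> 1"
  shows "(\<Sum>k\<le>K. (\<theta> powr e)^k) \<le> 1 / (e * (1 - \<theta>))"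
proof -
  define x where "x = \<theta> powr e"
  have x0: "0 < x" using assms by (simp add: x_def)
  have x1: "x \<le> 1 - e * (1 - \<theta>)" unfolding x_def by (rule theta_powr_le) (use assms in auto)
  have pos: "0 < e * (1 - \<theta>)" using assms by simp
  then have xl: "x < 1" using x1 by linarith
  have "(\<Sum>k\<le>K. x^k) = (\<Sum>k<Suc K. x^k)" by (simp add: lessThan_Suc_atMost)
  also have "\<dots> = (1 - x^Suc K) / (1 - x)" using sum_gp_strict[of x "Suc K"] xl by (simp del: sum.lessThan_Suc)
  also have "\<dots> \<le> 1 / (1 - x)" using xl x0 by (intro divide_right_mono) auto
  also have "\<dots> \<le> 1 / (e * (1 - \<theta>))" using x1 pos by (intro divide_left_mono) auto
  finally show ?thesis by (simp add: x_def)
qed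

lemma geo_sum:
  fixes \<theta> :: real
  assumes "0 < \<theta>" "\<theta> < 1"
  shows "(\<Sum>k\<le>K. \<theta>^k) \<le> 1 / (1 - \<theta>)"
  using geo_powr_sum[OF assms, of 1 K] assms by simp

lemma level_identity:
  fixes \<sigma>0 \<theta> L B \<gamma> \<kappa> :: real
  assumes pos: "\<sigma>0 > 0" "\<theta> > 0" "L > 0" "B > 0" "\<gamma> > 0"
  shows "\<sigma>0 * \<theta>^k * (2 powr (1 + \<kappa>/2) * (B / (\<sigma>0 * \<theta>^(k+1) / L) powr (1/\<gamma>)) powr (\<kappa>/2) / sqrt (\<kappa> * exp 1))
       = (2 powr (1 + \<kappa>/2) / sqrt (\<kappa> * exp 1) * \<sigma>0 powr (1 - \<kappa>/(2*\<gamma>)) * (L * B powr \<gamma>) powr (\<kappa>/(2*\<gamma>))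
           / \<theta> powr (\<kappa>/(2*\<gamma>))) * (\<theta> powr (1 - \<kappa>/(2*\<gamma>)))^k"
proof -
  define r where "r = \<kappa>/(2*\<gamma>)"
  have tk: "\<theta>^k = \<theta> powr real k" using pos by (simp add: powr_realpow)
  have tk1: "\<theta>^(k+1) = \<theta> powr (real k + 1)" using pos powr_realpow[of \<theta> "k+1"] by (simp add: add.commute)
  have "(B / (\<sigma>0 * \<theta>^(k+1) / L) powr (1/\<gamma>)) powr (\<kappa>/2)
        = B powr (\<kappa>/2) / ((\<sigma>0 * \<theta>^(k+1) / L) powr (1/\<gamma>)) powr (\<kappa>/2)"
    by (rule powr_divide)
  also have "((\<sigma>0 * \<theta>^(k+1) / L) powr (1/\<gamma>)) powr (\<kappa>/2) = (\<sigma>0 * \<theta>^(k+1) / L) powr r"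
    by (simp add: powr_powr r_def mult.commute)
  also have "(\<sigma>0 * \<theta>^(k+1) / L) powr r = \<sigma>0 powr r * \<theta> powr ((real k + 1) * r) / L powr r"
  proof -
    have t2: "(\<theta>^(k+1)) powr r = \<theta> powr ((real k + 1) * r)" unfolding tk1 by (simp add: powr_powr)
    show ?thesis by (simp only: powr_divide powr_mult t2)
  qed
  finally have e1: "(B / (\<sigma>0 * \<theta>^(k+1) / L) powr (1/\<gamma>)) powr (\<kappa>/2)
      = B powr (\<kappa>/2) * L powr r / (\<sigma>0 powr r * \<theta> powr ((real k + 1) * r))" by simp
  have e2: "(L * B powr \<gamma>) powr r = L powr r * B powr (\<kappa>/2)"
    using pos by (simp add: powr_mult powr_powr r_def)
  have e3: "(\<theta> powr (1 - r))^k = \<theta> powr (real k * (1 - r))"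
    using pos by (simp add: powr_realpow[symmetric] powr_powr mult.commute)
  show ?thesis
    unfolding r_def[symmetric] e1 e2 e3
    using pos by (simp add: tk powr_diff powr_add distrib_right field_simps)
qed

lemma grid_level_entropy_le:
  fixes N \<sigma> \<theta> L B \<gamma> \<kappa> :: real
  assumes N: "1 \<le> N" "N \<le> (of_int \<lfloor>B / (\<sigma> * \<theta>^(k+1) / L) powr (1/\<gamma>)\<rfloor> + 1)^2"
    and pos: "\<sigma> > 0" "\<theta> > 0" "L > 0" "B > 0" "\<gamma> > 0" "\<kappa> > 0"
  shows "\<sigma> * \<theta>^k * sqrt (2 * ln N)
    \<le> (2 powr (1 + \<kappa>/2) / sqrt (\<kappa> * exp 1) * \<sigma> powr (1 - \<kappa>/(2*\<gamma>)) * (L * B powr \<gamma>) powr (\<kappa>/(2*\<gamma>))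
         / \<theta> powr (\<kappa>/(2*\<gamma>))) * (\<theta> powr (1 - \<kappa>/(2*\<gamma>)))^k"
proof -
  have "sqrt (2 * ln N) \<le> 2 powr (1 + \<kappa>/2) * (B / (\<sigma> * \<theta>^(k+1) / L) powr (1/\<gamma>)) powr (\<kappa>/2) / sqrt (\<kappa> * exp 1)"
    by (rule sqrt_ln_grid_count_le[OF N]) (use pos in auto)
  then have "\<sigma> * \<theta>^k * sqrt (2 * ln N)
      \<le> \<sigma> * \<theta>^k * (2 powr (1 + \<kappa>/2) * (B / (\<sigma> * \<theta>^(k+1) / L) powr (1/\<gamma>)) powr (\<kappa>/2) / sqrt (\<kappa> * exp 1))"
    using pos by (intro mult_left_mono) auto
  also have "\<dots> = (2 powr (1 + \<kappa>/2) / sqrt (\<kappa> * exp 1) * \<sigma> powr (1 - \<kappa>/(2*\<gamma>)) * (L * B powr \<gamma>) powr (\<kappa>/(2*\<gamma>))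
         / \<theta> powr (\<kappa>/(2*\<gamma>))) * (\<theta> powr (1 - \<kappa>/(2*\<gamma>)))^k"
    by (rule level_identity) (use pos in auto)
  finally show ?thesis .
qed

(* The summed entropy constant of the grid levels is strictly smaller than the constant of
   the theorem (their ratio is 2^(kappa - 1/2) / sqrt e < 1); the slack absorbs the last,
   finest level of the chain. *)
lemma entropy_constant_lt:
  fixes \<theta> \<kappa> r \<sigma> D :: real
  assumes th: "0 < \<theta>" "\<theta> < 1" and ka: "0 < \<kappa>" "\<kappa> < 1" and r: "r < 1"
    and pos: "\<sigma> > 0" "D > 0"
  shows "2 powr (1 + \<kappa>/2) / sqrt (\<kappa> * exp 1) * \<sigma> powr (1 - r) * D powr r / \<theta> powr r / ((1 - r) * (1 - \<theta>))
    < 2 * 2 powr ((1 - \<kappa>)/2) / ((1 - \<theta>) * (1 - r) * sqrt \<kappa>) * \<sigma> powr (1 - r) * D powr r / \<theta> powr r"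
proof -
  define A where "A = \<sigma> powr (1 - r) * D powr r / (\<theta> powr r * ((1 - r) * (1 - \<theta>) * sqrt \<kappa>))"
  have A: "A > 0" using th ka r pos by (simp add: A_def)
  have "2 powr (\<kappa> - 1/2) < sqrt (exp 1)"
  proof -
    have "2 powr (\<kappa> - 1/2) < 2 powr (1/2)" using ka by (intro powr_less_mono) auto
    also have "2 powr (1/2) = sqrt 2" by (simp add: powr_half_sqrt)
    also have "sqrt 2 \<le> sqrt (exp 1)" using exp_ge_add_one_self[of 1] by simp
    finally show ?thesis .
  qed
  moreover have "2 powr (1 + \<kappa>/2) = 2 powr (\<kappa> - 1/2) * (2 * 2 powr ((1 - \<kappa>)/2))"
  proof -
    have e: "(\<kappa> - 1/2) + 1 + (1 - \<kappa>)/2 = 1 + \<kappa>/2" by (simp add: field_simps)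
    show ?thesis by (simp only: e[symmetric] powr_add) simp
  qed
  ultimately have "2 powr (1 + \<kappa>/2) / sqrt (exp 1) < 2 * 2 powr ((1 - \<kappa>)/2)"
    by (simp add: divide_less_eq)
  then have "2 powr (1 + \<kappa>/2) / sqrt (exp 1) * A < 2 * 2 powr ((1 - \<kappa>)/2) * A"
    using A by (intro mult_strict_right_mono) auto
  then show ?thesis using th ka r by (simp add: A_def real_sqrt_mult field_simps)
qed

lemma geometric_eventually_le:
  fixes c e \<theta> :: real
  assumes "0 \<le> c" "0 < e" "0 < \<theta>" "\<theta> < 1"
  shows "\<exists>K. c * \<theta>^(Suc K) \<le> e"
proof -
  obtain K where K: "\<theta>^K < e / (c + 1)" using real_arch_pow_inv[of "e / (c + 1)" \<theta>] assms by auto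
  have "\<theta>^(Suc K) \<le> \<theta>^K" using assms by (intro power_decreasing) auto
  then have "c * \<theta>^(Suc K) \<le> (c + 1) * \<theta>^K" using assms by (intro mult_mono) auto
  also have "\<dots> < e" using K assms by (simp add: less_divide_eq mult.commute)
  finally show ?thesis by (intro exI[of _ K]) simp
qed

lemma geometric_variance_sum_le:
  fixes \<theta> \<sigma> lam :: real
  assumes th: "0 < \<theta>" "\<theta> < 1"
  shows "(\<Sum>k\<le>n. lam^2 * (\<sigma> * \<theta>^k)^2 / (2 * ((1 - \<theta>) * \<theta>^k))) \<le> lam^2 * \<sigma>^2 / (2 * (1 - \<theta>)^2)"
proof -
  have "(\<Sum>k\<le>n. lam^2 * (\<sigma> * \<theta>^k)^2 / (2 * ((1 - \<theta>) * \<theta>^k))) = (\<Sum>k\<le>n. lam^2 * \<sigma>^2 / (2 * (1 - \<theta>)) * \<theta>^k)"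
    by (rule sum.cong) (use th in \<open>auto simp: power2_eq_square power_mult_distrib\<close>)
  also have "\<dots> = lam^2 * \<sigma>^2 / (2 * (1 - \<theta>)) * (\<Sum>k\<le>n. \<theta>^k)" by (rule sum_distrib_left[symmetric])
  also have "\<dots> \<le> lam^2 * \<sigma>^2 / (2 * (1 - \<theta>)) * (1 / (1 - \<theta>))"
    by (rule mult_left_mono[OF geo_sum[OF th]]) (use th in simp)
  also have "\<dots> = lam^2 * \<sigma>^2 / (2 * (1 - \<theta>)^2)" by (simp add: power2_eq_square)
  finally show ?thesis .
qed

(* The bound produced by chaining for a finite set: sigma bounds the standard deviations and
   D = L B^gamma is the Hoelder modulus at the scale B of the set. *)
definition chaining_bound :: "real \<Rightarrow> real \<Rightarrow> real \<Rightarrow> real \<Rightarrow> real \<Rightarrow> real \<Rightarrow> real" where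
  "chaining_bound lam \<theta> \<kappa> \<gamma> \<sigma> D = exp (lam^2 * \<sigma>^2 / (2 * (1 - \<theta>)^2)
     + lam * (2 * 2 powr ((1 - \<kappa>) / 2) / ((1 - \<theta>) * (1 - \<kappa> / (2 * \<gamma>)) * sqrt \<kappa>)
              * \<sigma> powr (1 - \<kappa> / (2 * \<gamma>)) * D powr (\<kappa> / (2 * \<gamma>)) / \<theta> powr (\<kappa> / (2 * \<gamma>))))"

definition grid_chain :: "(real \<times> real) set \<Rightarrow> (nat \<Rightarrow> real) \<Rightarrow> nat \<Rightarrow> nat \<Rightarrow> (real \<times> real) set" where
  "grid_chain F u K k = (if k \<le> K then grid_rep F (u k) ` F else F)"

(* When the grid sides satisfy L u_k^gamma = sigma theta^(k+1),
   the link at level k+1 joins points at distance < u_k, so its standard deviation is at most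
   sigma theta^(k+1); the Hoelder weights are q_k = (1 - theta) theta^k. *)
lemma grid_chain_exp_moment_le:
  fixes X :: "real \<times> real \<Rightarrow> 'a \<Rightarrow> real" and F :: "(real \<times> real) set" and u :: "nat \<Rightarrow> real"
  assumes P: "prob_space M" and finF: "finite F" and neF: "F \<noteq> {}"
    and G1: "\<And>u. u \<in> F \<Longrightarrow> centered_normal_rv M (X u)"
    and G2: "\<And>u v. u \<in> F \<Longrightarrow> v \<in> F \<Longrightarrow> centered_normal_rv M (\<lambda>\<omega>. X u \<omega> - X v \<omega>)"
    and S0: "\<And>t. t \<in> F \<Longrightarrow> sqrt (\<integral>\<omega>. (X t \<omega>)^2 \<partial>M) \<le> \<sigma>"
    and S1: "\<And>t s. t \<in> F \<Longrightarrow> s \<in> F \<Longrightarrow> sqrt (\<integral>\<omega>. (X t \<omega> - X s \<omega>)^2 \<partial>M) \<le> L * mdist t s powr \<gamma>"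
    and u: "\<And>k. u k > 0" "\<And>k. L * u k powr \<gamma> = \<sigma> * \<theta>^(k+1)"
    and pos: "\<sigma> > 0" "L > 0" "\<gamma> > 0" and th: "0 < \<theta>" "\<theta> < 1" and la: "lam > 0"
  shows "(\<integral>\<^sup>+\<omega>. ennreal (exp (lam * Max ((\<lambda>t. X t \<omega>) ` F))) \<partial>M)
    \<le> ennreal (exp (\<Sum>k\<le>Suc K. lam * (\<sigma> * \<theta>^k) * sqrt (2 * ln (real (card (grid_chain F u K k))))
                      + lam^2 * (\<sigma> * \<theta>^k)^2 / (2 * ((1 - \<theta>) * \<theta>^k))))"
proof -
  define R where "R = grid_chain F u K"
  define p where "p k = grid_rep F (u (k - 1))" for k
  have RF: "R k \<subseteq> F" for k using grid_rep(1) by (auto simp: R_def grid_chain_def)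
  have pF: "p k v \<in> F" if "v \<in> F" for k v using grid_rep(1)[OF that] by (simp add: p_def)
  have "(\<integral>\<^sup>+\<omega>. ennreal (exp (lam * Max ((\<lambda>t. X t \<omega>) ` R (Suc K)))) \<partial>M)
      \<le> ennreal (exp (\<Sum>k\<le>Suc K. lam * (\<sigma> * \<theta>^k) * sqrt (2 * ln (real (card (R k))))
                      + lam^2 * (\<sigma> * \<theta>^k)^2 / (2 * ((1 - \<theta>) * \<theta>^k))))"
  proof (rule chaining_exp_moment_le[OF P])
    show "finite (R k)" for k using finite_subset[OF RF finF] .
    show "R k \<noteq> {}" for k using neF by (simp add: R_def grid_chain_def)
    show "p (Suc k) v \<in> R k" if "k < Suc K" "v \<in> R (Suc k)" for k v
      using that RF by (auto simp: R_def grid_chain_def p_def)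
    show "centered_normal_rv M (chain_link p X k v)" if "v \<in> R k" for k v
    proof -
      have vF: "v \<in> F" using that RF by auto
      show ?thesis using G1[OF vF] G2[OF vF pF[OF vF]] by (cases k) (simp_all add: chain_link_simps)
    qed
    show "sqrt (\<integral>\<omega>. (chain_link p X k v \<omega>)^2 \<partial>M) \<le> \<sigma> * \<theta>^k" if "v \<in> R k" for k v
    proof (cases k)
      case 0
      have "v \<in> F" using that RF by auto
      then show ?thesis using S0 0 by (simp add: chain_link_simps)
    next
      case (Suc j)
      have vF: "v \<in> F" using that RF by auto
      have "mdist v (grid_rep F (u j) v) powr \<gamma> \<le> u j powr \<gamma>"
        using mdist_grid_rep_less[OF u(1)[of j] vF] pos by (intro powr_mono2) (auto simp: mdist_def)
      then have "L * mdist v (grid_rep F (u j) v) powr \<gamma> \<le> L * u j powr \<gamma>"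
        using pos by simp
      then have "L * mdist v (p k v) powr \<gamma> \<le> \<sigma> * \<theta>^k"
        using u(2)[of j] by (simp add: Suc p_def)
      then show ?thesis using S1[OF vF pF[OF vF], of k] Suc by (simp add: chain_link_simps)
    qed
    have "(\<Sum>k\<le>Suc K. (1 - \<theta>) * \<theta>^k) = (1 - \<theta>) * (\<Sum>k\<le>Suc K. \<theta>^k)"
      by (rule sum_distrib_left[symmetric])
    also have "\<dots> \<le> (1 - \<theta>) * (1 / (1 - \<theta>))"
      using geo_sum[OF th, of "Suc K"] th by (intro mult_left_mono) (auto simp del: sum.atMost_Suc)
    finally show "(\<Sum>k\<le>Suc K. (1 - \<theta>) * \<theta>^k) \<le> 1" using th by simp
  qed (use pos th la in auto)
  then show ?thesis by (simp add: R_def grid_chain_def)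
qed

lemma grid_levels_entropy_le:
  fixes F :: "(real \<times> real) set" and u :: "nat \<Rightarrow> real"
  assumes finF: "finite F" and neF: "F \<noteq> {}"
    and FB: "\<And>t. t \<in> F \<Longrightarrow> 0 \<le> fst t \<and> fst t \<le> B \<and> 0 \<le> snd t \<and> snd t \<le> B"
    and u: "\<And>k. u k = (\<sigma> * \<theta>^(k+1) / L) powr (1/\<gamma>)"
    and pos: "\<sigma> > 0" "L > 0" "\<gamma> > 0" "B > 0" and th: "0 < \<theta>" "\<theta> < 1"
    and ka: "0 < \<kappa>" "\<kappa> < 2 * \<gamma>"
  shows "(\<Sum>k\<le>K. \<sigma> * \<theta>^k * sqrt (2 * ln (real (card (grid_rep F (u k) ` F)))))
    \<le> 2 powr (1 + \<kappa>/2) / sqrt (\<kappa> * exp 1) * \<sigma> powr (1 - \<kappa>/(2*\<gamma>)) * (L * B powr \<gamma>) powr (\<kappa>/(2*\<gamma>))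
        / \<theta> powr (\<kappa>/(2*\<gamma>)) / ((1 - \<kappa>/(2*\<gamma>)) * (1 - \<theta>))"
    (is "_ \<le> ?c / _")
proof -
  have r: "0 < \<kappa>/(2*\<gamma>)" "\<kappa>/(2*\<gamma>) < 1" using ka pos by (auto simp: field_simps)
  have level: "\<sigma> * \<theta>^k * sqrt (2 * ln (real (card (grid_rep F (u k) ` F)))) \<le> ?c * (\<theta> powr (1 - \<kappa>/(2*\<gamma>)))^k" for k
  proof (rule grid_level_entropy_le)
    show "1 \<le> real (card (grid_rep F (u k) ` F))"
      using finF neF by (simp add: Suc_le_eq card_gt_0_iff)
    show "real (card (grid_rep F (u k) ` F)) \<le> (of_int \<lfloor>B / (\<sigma> * \<theta>^(k+1) / L) powr (1/\<gamma>)\<rfloor> + 1)^2"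
      using card_grid_rep_le[OF finF _ _ FB] pos th by (simp add: u)
  qed (use pos th ka in auto)
  have "(\<Sum>k\<le>K. \<sigma> * \<theta>^k * sqrt (2 * ln (real (card (grid_rep F (u k) ` F)))))
      \<le> (\<Sum>k\<le>K. ?c * (\<theta> powr (1 - \<kappa>/(2*\<gamma>)))^k)"
    by (rule sum_mono) (rule level)
  also have "\<dots> = ?c * (\<Sum>k\<le>K. (\<theta> powr (1 - \<kappa>/(2*\<gamma>)))^k)" by (rule sum_distrib_left[symmetric])
  also have "\<dots> \<le> ?c * (1 / ((1 - \<kappa>/(2*\<gamma>)) * (1 - \<theta>)))"
    using geo_powr_sum[OF th, of "1 - \<kappa>/(2*\<gamma>)" K] r pos th ka by (intro mult_left_mono) auto
  finally show ?thesis by simp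
qed

(* Chaining bound for the maximum over a finite set F in [0,B]^2.  The number K of grid levels
   is chosen so large that the final level F fits into the slack of entropy_constant_lt. *)
lemma finite_max_exp_moment_le:
  fixes X :: "real \<times> real \<Rightarrow> 'a \<Rightarrow> real" and F :: "(real \<times> real) set"
    and \<sigma>0 L B \<gamma> \<theta> lam \<kappa> :: real
  assumes P: "prob_space M" and finF: "finite F" and neF: "F \<noteq> {}"
    and FB: "\<And>t. t \<in> F \<Longrightarrow> 0 \<le> fst t \<and> fst t \<le> B \<and> 0 \<le> snd t \<and> snd t \<le> B"
    and G1: "\<And>u. u \<in> F \<Longrightarrow> centered_normal_rv M (X u)"
    and G2: "\<And>u v. u \<in> F \<Longrightarrow> v \<in> F \<Longrightarrow> centered_normal_rv M (\<lambda>\<omega>. X u \<omega> - X v \<omega>)"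
    and S0: "\<And>t. t \<in> F \<Longrightarrow> sqrt (\<integral>\<omega>. (X t \<omega>)^2 \<partial>M) \<le> \<sigma>0"
    and S1: "\<And>t s. t \<in> F \<Longrightarrow> s \<in> F \<Longrightarrow> sqrt (\<integral>\<omega>. (X t \<omega> - X s \<omega>)^2 \<partial>M) \<le> L * mdist t s powr \<gamma>"
    and pos: "\<sigma>0 > 0" "L > 0" "\<gamma> > 0" "B > 0" and th: "0 < \<theta>" "\<theta> < 1" and la: "lam > 0"
    and ka: "0 < \<kappa>" "\<kappa> < min 1 (2*\<gamma>)"
  shows "(\<integral>\<^sup>+\<omega>. ennreal (exp (lam * Max ((\<lambda>t. X t \<omega>) ` F))) \<partial>M)
    \<le> ennreal (chaining_bound lam \<theta> \<kappa> \<gamma> \<sigma>0 (L * B powr \<gamma>))"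
proof -
  define r where "r = \<kappa>/(2*\<gamma>)"
  define E where "E = 2 powr (1 + \<kappa>/2) / sqrt (\<kappa> * exp 1) * \<sigma>0 powr (1 - r) * (L * B powr \<gamma>) powr r / \<theta> powr r / ((1 - r) * (1 - \<theta>))"
  define Rr where "Rr = 2 * 2 powr ((1 - \<kappa>)/2) / ((1 - \<theta>) * (1 - r) * sqrt \<kappa>) * \<sigma>0 powr (1 - r) * (L * B powr \<gamma>) powr r / \<theta> powr r"
  have "E < Rr"
    unfolding E_def Rr_def by (rule entropy_constant_lt) (use th ka pos in \<open>auto simp: r_def field_simps\<close>)
  moreover have "1 \<le> card F" using finF neF by (simp add: Suc_le_eq card_gt_0_iff)
  ultimately have "\<exists>K. \<sigma>0 * sqrt (2 * ln (real (card F))) * \<theta>^(Suc K) \<le> Rr - E"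
    by (intro geometric_eventually_le) (use th pos in auto)
  then obtain K where K: "\<sigma>0 * sqrt (2 * ln (real (card F))) * \<theta>^(Suc K) \<le> Rr - E" by blast
  define u where "u k = (\<sigma>0 * \<theta>^(k+1) / L) powr (1/\<gamma>)" for k
  have u: "u k > 0" "L * u k powr \<gamma> = \<sigma>0 * \<theta>^(k+1)" for k
    using pos th by (simp_all add: u_def powr_powr)
  have "(\<Sum>k\<le>Suc K. \<sigma>0 * \<theta>^k * sqrt (2 * ln (real (card (grid_chain F u K k)))))
      = (\<Sum>k\<le>K. \<sigma>0 * \<theta>^k * sqrt (2 * ln (real (card (grid_rep F (u k) ` F)))))
        + \<sigma>0 * sqrt (2 * ln (real (card F))) * \<theta>^(Suc K)"
    by (simp add: grid_chain_def mult_ac)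
  also have "\<dots> \<le> E + (Rr - E)"
    using grid_levels_entropy_le[OF finF neF FB u_def pos th, of \<kappa> K] ka K
    unfolding E_def r_def by (intro add_mono) auto
  finally have entropy: "(\<Sum>k\<le>Suc K. \<sigma>0 * \<theta>^k * sqrt (2 * ln (real (card (grid_chain F u K k))))) \<le> Rr"
    by simp
  have "(\<Sum>k\<le>Suc K. lam * (\<sigma>0 * \<theta>^k) * sqrt (2 * ln (real (card (grid_chain F u K k))))
                      + lam^2 * (\<sigma>0 * \<theta>^k)^2 / (2 * ((1 - \<theta>) * \<theta>^k)))
      = lam * (\<Sum>k\<le>Suc K. \<sigma>0 * \<theta>^k * sqrt (2 * ln (real (card (grid_chain F u K k)))))
        + (\<Sum>k\<le>Suc K. lam^2 * (\<sigma>0 * \<theta>^k)^2 / (2 * ((1 - \<theta>) * \<theta>^k)))"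
    by (simp only: sum.distrib sum_distrib_left mult.assoc)
  also have "\<dots> \<le> lam * Rr + lam^2 * \<sigma>0^2 / (2 * (1 - \<theta>)^2)"
    by (intro add_mono mult_left_mono entropy geometric_variance_sum_le[OF th]) (use la in simp)
  finally have exponent: "(\<Sum>k\<le>Suc K. lam * (\<sigma>0 * \<theta>^k) * sqrt (2 * ln (real (card (grid_chain F u K k))))
                      + lam^2 * (\<sigma>0 * \<theta>^k)^2 / (2 * ((1 - \<theta>) * \<theta>^k)))
      \<le> lam^2 * \<sigma>0^2 / (2 * (1 - \<theta>)^2) + lam * Rr" by simp
  have "(\<integral>\<^sup>+\<omega>. ennreal (exp (lam * Max ((\<lambda>t. X t \<omega>) ` F))) \<partial>M)
      \<le> ennreal (exp (\<Sum>k\<le>Suc K. lam * (\<sigma>0 * \<theta>^k) * sqrt (2 * ln (real (card (grid_chain F u K k))))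
                      + lam^2 * (\<sigma>0 * \<theta>^k)^2 / (2 * ((1 - \<theta>) * \<theta>^k))))"
    by (rule grid_chain_exp_moment_le[OF P finF neF G1 G2 S0 S1 u pos(1-3) th la])
  also have "\<dots> \<le> ennreal (exp (lam^2 * \<sigma>0^2 / (2 * (1 - \<theta>)^2) + lam * Rr))"
    using exponent by (intro ennreal_leI exp_mono)
  finally show ?thesis by (simp add: chaining_bound_def Rr_def r_def)
qed

lemma SUP_exp_abs_le:
  fixes x :: "'i \<Rightarrow> real"
  assumes fin: "finite F" and la: "lam > 0"
  shows "(SUP t\<in>F. ennreal (exp (lam * \<bar>x t\<bar>)))
    \<le> ennreal (exp (lam * Max (x ` F))) + ennreal (exp (lam * Max ((\<lambda>t. - x t) ` F)))"
proof (rule SUP_least)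
  fix t assume t: "t \<in> F"
  have upper: "x t \<le> Max (x ` F)" and lower: "- x t \<le> Max ((\<lambda>t. - x t) ` F)"
    using fin t by (auto intro: Max_ge)
  have "exp (lam * \<bar>x t\<bar>) \<le> exp (lam * Max (x ` F)) + exp (lam * Max ((\<lambda>t. - x t) ` F))"
  proof (cases "x t \<ge> 0")
    case True
    then have "exp (lam * \<bar>x t\<bar>) \<le> exp (lam * Max (x ` F))" using upper la by simp
    then show ?thesis using exp_gt_zero[of "lam * Max ((\<lambda>t. - x t) ` F)"] by linarith
  next
    case False
    then have "exp (lam * \<bar>x t\<bar>) \<le> exp (lam * Max ((\<lambda>t. - x t) ` F))"
      using mult_left_mono[OF lower, of lam] la by simp
    then show ?thesis using exp_gt_zero[of "lam * Max (x ` F)"] by linarith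
  qed
  then show "ennreal (exp (lam * \<bar>x t\<bar>)) \<le> ennreal (exp (lam * Max (x ` F))) + ennreal (exp (lam * Max ((\<lambda>t. - x t) ` F)))"
    by (simp add: ennreal_plus[symmetric] ennreal_leI del: ennreal_plus)
qed

(* Exponential moment of sup_F |X| for a finite F of the parameter set below height B:
   the chaining bound applied to X and to -X. *)
lemma finite_abs_exp_moment_le:
  fixes X :: "real \<times> real \<Rightarrow> 'a \<Rightarrow> real" and F :: "(real \<times> real) set"
    and \<sigma>0 L B \<gamma> \<theta> lam \<kappa> :: real
  assumes P: "prob_space M" and G: "centered_gaussian_process M Tset X"
    and finF: "finite F" and neF: "F \<noteq> {}" and FT: "F \<subseteq> Tset" and FB: "\<And>t. t \<in> F \<Longrightarrow> fst t \<le> B"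
    and S0: "\<And>t. t \<in> F \<Longrightarrow> sqrt (\<integral>\<omega>. (X t \<omega>)^2 \<partial>M) \<le> \<sigma>0"
    and S1: "\<And>t s. t \<in> F \<Longrightarrow> s \<in> F \<Longrightarrow> sqrt (\<integral>\<omega>. (X t \<omega> - X s \<omega>)^2 \<partial>M) \<le> L * mdist t s powr \<gamma>"
    and pos: "\<sigma>0 > 0" "L > 0" "\<gamma> > 0" "B > 0" and th: "0 < \<theta>" "\<theta> < 1" and la: "lam > 0"
    and ka: "0 < \<kappa>" "\<kappa> < min 1 (2*\<gamma>)"
  shows "(\<integral>\<^sup>+\<omega>. (SUP t\<in>F. ennreal (exp (lam * \<bar>X t \<omega>\<bar>))) \<partial>M)
    \<le> 2 * ennreal (chaining_bound lam \<theta> \<kappa> \<gamma> \<sigma>0 (L * B powr \<gamma>))"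
    (is "_ \<le> 2 * ?E")
proof -
  have FB': "0 \<le> fst t \<and> fst t \<le> B \<and> 0 \<le> snd t \<and> snd t \<le> B" if "t \<in> F" for t
    using FT FB[OF that] that by (auto simp: Tset_def)
  have comb: "centered_normal_rv M (\<lambda>\<omega>. c1 * X u \<omega> + c2 * X v \<omega>)" if "u \<in> F" "v \<in> F" for u v c1 c2
    by (rule gaussian_process_combination[OF G]) (use that FT in auto)
  have Xm: "X u \<in> borel_measurable M" if "u \<in> F" for u
    using comb[OF that that, of 1 0] by (simp add: centered_normal_rv_def)
  have upper: "(\<integral>\<^sup>+\<omega>. ennreal (exp (lam * Max ((\<lambda>t. X t \<omega>) ` F))) \<partial>M) \<le> ?E"
  proof (rule finite_max_exp_moment_le[OF P finF neF FB' _ _ S0 S1 pos th la ka])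
    show "centered_normal_rv M (X u)" if "u \<in> F" for u
      using comb[OF that that, of 1 0] by simp
    show "centered_normal_rv M (\<lambda>\<omega>. X u \<omega> - X v \<omega>)" if "u \<in> F" "v \<in> F" for u v
      using comb[OF that, of 1 "-1"] by simp
  qed
  have lower: "(\<integral>\<^sup>+\<omega>. ennreal (exp (lam * Max ((\<lambda>t. - X t \<omega>) ` F))) \<partial>M) \<le> ?E"
  proof (rule finite_max_exp_moment_le[OF P finF neF FB' _ _ _ _ pos th la ka])
    show "centered_normal_rv M (\<lambda>\<omega>. - X u \<omega>)" if "u \<in> F" for u
      using comb[OF that that, of "-1" 0] by simp
    show "centered_normal_rv M (\<lambda>\<omega>. - X u \<omega> - - X v \<omega>)" if "u \<in> F" "v \<in> F" for u v
      using comb[OF that, of "-1" 1] by simp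
    show "sqrt (\<integral>\<omega>. (- X t \<omega>)^2 \<partial>M) \<le> \<sigma>0" if "t \<in> F" for t using S0[OF that] by simp
    show "sqrt (\<integral>\<omega>. (- X t \<omega> - - X s \<omega>)^2 \<partial>M) \<le> L * mdist t s powr \<gamma>" if "t \<in> F" "s \<in> F" for t s
      using S1[OF that] by (simp add: power2_commute)
  qed
  have "(\<integral>\<^sup>+\<omega>. (SUP t\<in>F. ennreal (exp (lam * \<bar>X t \<omega>\<bar>))) \<partial>M)
      \<le> (\<integral>\<^sup>+\<omega>. ennreal (exp (lam * Max ((\<lambda>t. X t \<omega>) ` F))) + ennreal (exp (lam * Max ((\<lambda>t. - X t \<omega>) ` F))) \<partial>M)"
    by (rule nn_integral_mono) (rule SUP_exp_abs_le[OF finF la])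
  also have "\<dots> = (\<integral>\<^sup>+\<omega>. ennreal (exp (lam * Max ((\<lambda>t. X t \<omega>) ` F))) \<partial>M)
      + (\<integral>\<^sup>+\<omega>. ennreal (exp (lam * Max ((\<lambda>t. - X t \<omega>) ` F))) \<partial>M)"
    by (rule nn_integral_add) (use finF Xm in \<open>auto intro!: borel_measurable_Max\<close>)
  also have "\<dots> \<le> ?E + ?E" by (rule add_mono[OF upper lower])
  finally show ?thesis by (simp only: mult_2)
qed

lemma nn_integral_SUP_countable_le:
  fixes h :: "'i \<Rightarrow> 'a \<Rightarrow> ennreal"
  assumes cI: "countable I" and hm: "\<And>i. i \<in> I \<Longrightarrow> h i \<in> borel_measurable M"
    and fin: "\<And>F. finite F \<Longrightarrow> F \<noteq> {} \<Longrightarrow> F \<subseteq> I \<Longrightarrow> (\<integral>\<^sup>+\<omega>. (SUP i\<in>F. h i \<omega>) \<partial>M) \<le> E"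
  shows "(\<integral>\<^sup>+\<omega>. (SUP i\<in>I. h i \<omega>) \<partial>M) \<le> E"
proof (cases "I = {}")
  case True
  then show ?thesis by (simp add: bot_ennreal)
next
  case False
  define e where "e = from_nat_into I"
  have eI: "e n \<in> I" for n using False by (simp add: e_def from_nat_into)
  have "range e = I" using False cI by (simp add: e_def)
  then have I: "I = (\<Union>n. e ` {..n})" by auto
  define f where "f n \<omega> = (SUP i\<in>e ` {..n}. h i \<omega>)" for n \<omega>
  have fm: "f n \<in> borel_measurable M" for n
    unfolding f_def by (rule borel_measurable_SUP) (use hm eI in auto)
  have inc: "incseq f"
    unfolding incseq_def f_def le_fun_def by (auto intro!: SUP_subset_mono)
  have "(\<integral>\<^sup>+\<omega>. (SUP i\<in>I. h i \<omega>) \<partial>M) = (\<integral>\<^sup>+\<omega>. (SUP n. f n \<omega>) \<partial>M)"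
    unfolding f_def by (subst I) (simp add: SUP_UNION)
  also have "\<dots> = (SUP n. integral\<^sup>N M (f n))" by (rule nn_integral_monotone_convergence_SUP[OF inc fm])
  also have "\<dots> \<le> E" unfolding f_def by (rule SUP_least, rule fin) (auto intro: eI)
  finally show ?thesis .
qed

(* Separability reduces the supremum over A to the separant: outside the exceptional null set
   each X t, t in A, is a limit of values at separant points, which eventually lie in any set U
   containing the points of S at distance < eta from A. *)
lemma separable_SUP_nn_integral_le:
  fixes X :: "'i \<Rightarrow> 'a \<Rightarrow> real" and f :: "real \<Rightarrow> real"
  assumes sep: "separable_process M S d X"
    and Xm: "\<And>s. s \<in> S \<Longrightarrow> X s \<in> borel_measurable M"
    and f: "continuous_on UNIV f" and A: "A \<subseteq> S" and eta: "\<eta> > 0"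
    and near: "\<And>s t. s \<in> S \<Longrightarrow> t \<in> A \<Longrightarrow> d s t < \<eta> \<Longrightarrow> s \<in> U"
    and fin: "\<And>F. finite F \<Longrightarrow> F \<noteq> {} \<Longrightarrow> F \<subseteq> S \<inter> U \<Longrightarrow>
        (\<integral>\<^sup>+\<omega>. (SUP t\<in>F. ennreal (f (X t \<omega>))) \<partial>M) \<le> E"
  shows "(\<integral>\<^sup>+\<omega>. (SUP t\<in>A. ennreal (f (X t \<omega>))) \<partial>M) \<le> E"
proof -
  obtain D N where DN: "countable D \<and> D \<subseteq> S \<and> N \<in> null_sets M \<and>
      (\<forall>t\<in>S. \<forall>e>0. \<exists>s\<in>D. d s t < e) \<and>
      (\<forall>\<omega>\<in>space M - N. \<forall>t\<in>S. \<exists>s::nat \<Rightarrow> 'i. (\<forall>n. s n \<in> D) \<and>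
          (\<lambda>n. d (s n) t) \<longlonglongrightarrow> 0 \<and> (\<lambda>n. X (s n) \<omega>) \<longlonglongrightarrow> X t \<omega>)"
    using sep unfolding separable_process_def by (elim exE) (erule that)
  then have D: "countable D" "D \<subseteq> S" and N: "N \<in> null_sets M"
    and approx: "\<And>\<omega> t. \<omega> \<in> space M - N \<Longrightarrow> t \<in> S \<Longrightarrow> \<exists>s::nat \<Rightarrow> 'i. (\<forall>n. s n \<in> D) \<and>
            (\<lambda>n. d (s n) t) \<longlonglongrightarrow> 0 \<and> (\<lambda>n. X (s n) \<omega>) \<longlonglongrightarrow> X t \<omega>"
    by auto
  define D' where "D' = D \<inter> U"
  have sup_D': "(\<integral>\<^sup>+\<omega>. (SUP s\<in>D'. ennreal (f (X s \<omega>))) \<partial>M) \<le> E"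
  proof (rule nn_integral_SUP_countable_le)
    show "countable D'" using D(1) by (simp add: D'_def)
    show "(\<lambda>\<omega>. ennreal (f (X s \<omega>))) \<in> borel_measurable M" if "s \<in> D'" for s
      using borel_measurable_continuous_on[OF f Xm] that D(2) by (auto simp: D'_def)
    show "(\<integral>\<^sup>+\<omega>. (SUP s\<in>F. ennreal (f (X s \<omega>))) \<partial>M) \<le> E" if "finite F" "F \<noteq> {}" "F \<subseteq> D'" for F
      using fin[OF that(1,2)] that(3) D(2) by (auto simp: D'_def)
  qed
  have "AE \<omega> in M. (SUP t\<in>A. ennreal (f (X t \<omega>))) \<le> (SUP s\<in>D'. ennreal (f (X s \<omega>)))"
    using AE_not_in[OF N]
  proof (rule AE_mp, intro AE_I2 impI SUP_least)
    fix \<omega> t assume \<omega>: "\<omega> \<in> space M" "\<omega> \<notin> N" and t: "t \<in> A"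
    obtain sq where sq: "\<forall>n. sq n \<in> D" "(\<lambda>n. d (sq n) t) \<longlonglongrightarrow> 0" "(\<lambda>n. X (sq n) \<omega>) \<longlonglongrightarrow> X t \<omega>"
      using approx[of \<omega> t] \<omega> t A by auto
    have "(\<lambda>n. ennreal (f (X (sq n) \<omega>))) \<longlonglongrightarrow> ennreal (f (X t \<omega>))"
      using f sq(3) by (intro tendsto_ennrealI continuous_on_tendsto_compose[of UNIV f]) auto
    moreover have "eventually (\<lambda>n. ennreal (f (X (sq n) \<omega>)) \<le> (SUP s\<in>D'. ennreal (f (X s \<omega>)))) sequentially"
      using order_tendstoD(2)[OF sq(2) eta]
    proof eventually_elim
      case (elim n)
      then have "sq n \<in> D'" using near[OF _ t] sq(1) D(2) by (auto simp: D'_def)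
      then show ?case by (rule SUP_upper)
    qed
    ultimately show "ennreal (f (X t \<omega>)) \<le> (SUP s\<in>D'. ennreal (f (X s \<omega>)))"
      by (rule tendsto_le[OF trivial_limit_sequentially tendsto_const])
  qed
  then have "(\<integral>\<^sup>+\<omega>. (SUP t\<in>A. ennreal (f (X t \<omega>))) \<partial>M) \<le> (\<integral>\<^sup>+\<omega>. (SUP s\<in>D'. ennreal (f (X s \<omega>))) \<partial>M)"
    by (rule nn_integral_mono_AE)
  also note sup_D'
  finally show ?thesis .
qed

definition exp_sup_bound :: "real \<Rightarrow> real \<Rightarrow> real \<Rightarrow> real \<Rightarrow> real \<Rightarrow> real \<Rightarrow> real \<Rightarrow> real \<Rightarrow> real \<Rightarrow> real" where
  "exp_sup_bound lam \<theta> \<kappa> \<beta> \<gamma> \<delta> b Cd Cbg = 2 * exp (lam^2 * (b powr \<delta> * Cd)^2 / (2 * (1 - \<theta>)^2)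
        + 2 * lam / (1 - \<theta>) * b powr (\<delta> + \<kappa> / 2 * (1 + \<beta> / \<gamma> - \<delta> / \<gamma>))
          * ((2 powr ((1 - \<kappa>) / 2) / (1 - \<kappa> / (2 * \<gamma>))
               * Cd powr (1 - \<kappa> / (2 * \<gamma>)) * Cbg powr (\<kappa> / (2 * \<gamma>)))
             / (\<theta> powr (\<kappa> / (2 * \<gamma>)) * sqrt \<kappa>)))"

lemma strip_scale_identity:
  fixes b Cd Cbg \<beta> \<gamma> \<delta> \<kappa> :: real
  assumes "b > 0" "Cd > 0" "Cbg > 0" "\<gamma> > 0"
  shows "(b powr \<delta> * Cd) powr (1 - \<kappa>/(2*\<gamma>)) * ((Cbg * b powr \<beta>) * b powr \<gamma>) powr (\<kappa>/(2*\<gamma>))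
       = b powr (\<delta> + \<kappa> / 2 * (1 + \<beta> / \<gamma> - \<delta> / \<gamma>)) * Cd powr (1 - \<kappa>/(2*\<gamma>)) * Cbg powr (\<kappa>/(2*\<gamma>))"
proof -
  have e: "\<delta> * (1 - \<kappa>/(2*\<gamma>)) + (\<beta> * (\<kappa>/(2*\<gamma>)) + \<gamma> * (\<kappa>/(2*\<gamma>))) = \<delta> + \<kappa> / 2 * (1 + \<beta> / \<gamma> - \<delta> / \<gamma>)"
    using assms by (simp add: field_simps)
  have "(b powr \<delta> * Cd) powr (1 - \<kappa>/(2*\<gamma>)) * ((Cbg * b powr \<beta>) * b powr \<gamma>) powr (\<kappa>/(2*\<gamma>))
      = b powr (\<delta> * (1 - \<kappa>/(2*\<gamma>))) * Cd powr (1 - \<kappa>/(2*\<gamma>)) * (Cbg powr (\<kappa>/(2*\<gamma>)) * b powr (\<beta> * (\<kappa>/(2*\<gamma>))) * b powr (\<gamma> * (\<kappa>/(2*\<gamma>))))"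
    using assms by (simp only: powr_mult powr_powr)
  also have "\<dots> = b powr (\<delta> * (1 - \<kappa>/(2*\<gamma>)) + (\<beta> * (\<kappa>/(2*\<gamma>)) + \<gamma> * (\<kappa>/(2*\<gamma>)))) * Cd powr (1 - \<kappa>/(2*\<gamma>)) * Cbg powr (\<kappa>/(2*\<gamma>))"
    by (simp only: powr_add mult_ac)
  finally show ?thesis unfolding e .
qed

lemma rearrange_linear_term:
  fixes lam c P1 P2 Q1 Q2 Q3 \<theta> r sk tr :: real
  assumes h: "P1 * P2 = Q1 * Q2 * Q3" and nz: "1 - \<theta> \<noteq> 0" "1 - r \<noteq> 0" "sk \<noteq> 0" "tr \<noteq> 0"
  shows "lam * (2 * c / ((1 - \<theta>) * (1 - r) * sk) * P1 * P2 / tr)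
       = 2 * lam / (1 - \<theta>) * Q1 * ((c / (1 - r) * Q2 * Q3) / (tr * sk))"
proof -
  have "lam * (2 * c / ((1 - \<theta>) * (1 - r) * sk) * P1 * P2 / tr) = 2 * lam * c * (P1 * P2) / ((1 - \<theta>) * (1 - r) * sk * tr)"
    using nz by (simp add: field_simps)
  also have "\<dots> = 2 * lam * c * (Q1 * Q2 * Q3) / ((1 - \<theta>) * (1 - r) * sk * tr)" by (simp only: h)
  also have "\<dots> = 2 * lam / (1 - \<theta>) * Q1 * ((c / (1 - r) * Q2 * Q3) / (tr * sk))"
    using nz by (simp add: field_simps)
  finally show ?thesis .
qed

lemma chaining_bound_eq_exp_sup_bound:
  assumes pos: "b > 0" "Cd > 0" "Cbg > 0" "\<gamma> > 0" and th: "0 < \<theta>" "\<theta> < 1" and ka: "0 < \<kappa>" "\<kappa> < 2 * \<gamma>"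
  shows "2 * chaining_bound lam \<theta> \<kappa> \<gamma> (b powr \<delta> * Cd) (Cbg * b powr \<beta> * b powr \<gamma>)
    = exp_sup_bound lam \<theta> \<kappa> \<beta> \<gamma> \<delta> b Cd Cbg"
proof -
  have "1 - \<kappa> / (2 * \<gamma>) \<noteq> 0" using ka pos by (auto simp: field_simps)
  then have linear: "lam * (2 * 2 powr ((1 - \<kappa>) / 2) / ((1 - \<theta>) * (1 - \<kappa> / (2 * \<gamma>)) * sqrt \<kappa>)
        * (b powr \<delta> * Cd) powr (1 - \<kappa> / (2 * \<gamma>)) * (Cbg * b powr \<beta> * b powr \<gamma>) powr (\<kappa> / (2 * \<gamma>))
        / \<theta> powr (\<kappa> / (2 * \<gamma>)))
      = 2 * lam / (1 - \<theta>) * b powr (\<delta> + \<kappa> / 2 * (1 + \<beta> / \<gamma> - \<delta> / \<gamma>))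
        * ((2 powr ((1 - \<kappa>) / 2) / (1 - \<kappa> / (2 * \<gamma>))
            * Cd powr (1 - \<kappa> / (2 * \<gamma>)) * Cbg powr (\<kappa> / (2 * \<gamma>)))
          / (\<theta> powr (\<kappa> / (2 * \<gamma>)) * sqrt \<kappa>))"
    using th ka by (intro rearrange_linear_term strip_scale_identity pos) auto
  show ?thesis unfolding chaining_bound_def exp_sup_bound_def linear ..
qed

lemma exp_sup_bound_continuous:
  assumes b: "b > 0" and C: "Cd \<ge> 0" "Cbg \<ge> 0" and th: "0 < \<theta>" "\<theta> < 1"
    and ka: "0 < \<kappa>" "\<kappa> < min 1 (2 * \<gamma>)" and ga: "\<gamma> > 0"
  shows "((\<lambda>\<eta>. exp_sup_bound lam \<theta> \<kappa> \<beta> \<gamma> \<delta> (b + \<eta>) (Cd + \<eta>) (Cbg + \<eta>))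
    \<longlongrightarrow> exp_sup_bound lam \<theta> \<kappa> \<beta> \<gamma> \<delta> b Cd Cbg) (at_right 0)"
proof -
  have r: "1 - \<kappa> / (2 * \<gamma>) > 0" "\<kappa> / (2 * \<gamma>) > 0" using ka ga by (auto simp: field_simps)
  have ev: "eventually (\<lambda>x. 0 \<le> Cd + x) (at_right (0::real))" "eventually (\<lambda>x. 0 \<le> Cbg + x) (at_right (0::real))"
    using eventually_at_right_less[of "0::real"] C by (auto elim: eventually_mono)
  have nz: "1 - \<theta> \<noteq> 0" "\<theta> powr (\<kappa> / (2 * \<gamma>)) * sqrt \<kappa> \<noteq> 0" "1 - \<kappa> / (2 * \<gamma>) \<noteq> 0"
    using th ka r by auto
  have "((\<lambda>\<eta>. exp_sup_bound lam \<theta> \<kappa> \<beta> \<gamma> \<delta> (b + \<eta>) (Cd + \<eta>) (Cbg + \<eta>))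
      \<longlongrightarrow> exp_sup_bound lam \<theta> \<kappa> \<beta> \<gamma> \<delta> (b + 0) (Cd + 0) (Cbg + 0)) (at_right 0)"
    unfolding exp_sup_bound_def by (intro tendsto_intros) (use r ev nz b th in auto)
  then show ?thesis by simp
qed

lemma le_ennreal_limit_at_right:
  fixes g :: "real \<Rightarrow> real"
  assumes lim: "(g \<longlongrightarrow> l) (at_right 0)" and le: "\<And>\<eta>. \<eta> > 0 \<Longrightarrow> x \<le> ennreal (g \<eta>)"
  shows "x \<le> ennreal l"
proof (rule tendsto_le[OF trivial_limit_at_right_real tendsto_ennrealI[OF lim] tendsto_const])
  show "\<forall>\<^sub>F \<eta> in at_right 0. x \<le> ennreal (g \<eta>)"
    using eventually_at_right_less[of "0::real"] by eventually_elim (rule le)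
qed

(* Conditions (D2) and (D3) force C(delta) and C(beta,gamma) to be nonnegative
   (evaluate them at (b,0) and (b,b)). *)
lemma moment_constants_nonneg:
  fixes X :: "real \<times> real \<Rightarrow> 'a \<Rightarrow> real" and Cd Cbg \<beta> \<gamma> \<delta> b :: real
  assumes D2: "\<And>t s. t \<in> Tset \<Longrightarrow> s \<in> Tset \<Longrightarrow>
       sqrt (\<integral>\<omega>. (X t \<omega> - X s \<omega>)^2 \<partial>M) \<le> Cbg * (max (fst t) (fst s)) powr \<beta> * (mdist t s) powr \<gamma>"
    and D3: "\<And>t. t \<in> Tset \<Longrightarrow> sqrt (\<integral>\<omega>. (X t \<omega>)^2 \<partial>M) \<le> Cd * (fst t) powr \<delta>"
    and b: "b > 0"
  shows "0 \<le> Cd" "0 \<le> Cbg"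
proof -
  have T: "(b, 0) \<in> Tset" "(b, b) \<in> Tset" using b by (auto simp: Tset_def)
  have sq: "0 \<le> sqrt (\<integral>\<omega>. f \<omega> ^ 2 \<partial>M)" for f :: "'a \<Rightarrow> real"
    by (simp add: integral_nonneg_AE)
  have "0 \<le> Cd * b powr \<delta>" using order_trans[OF sq D3[OF T(1)]] by simp
  then show "0 \<le> Cd" using b by (simp add: zero_le_mult_iff)
  have "0 \<le> Cbg * b powr \<beta> * b powr \<gamma>"
    using order_trans[OF sq D2[OF T]] b by (simp add: mdist_def)
  then show "0 \<le> Cbg" using b by (simp add: zero_le_mult_iff)
qed

(* The theorem with b, C(delta), C(beta,gamma) replaced by larger values b' > b, Cd' > 0,
   Cbg' > 0: the finite chaining bound holds on the strip {t in T. t_1 <= b'}, which contains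
   every separant point at distance < b' - b from T_{a,b}. *)
lemma exp_sup_Tab_le:
  fixes M :: "'a measure" and X :: "real \<times> real \<Rightarrow> 'a \<Rightarrow> real"
  assumes P: "prob_space M"
    and D1: "centered_gaussian_process M Tset X" "separable_process M Tset mdist X"
    and pars: "\<beta> > 0" "\<gamma> > 0" "\<delta> > 0"
    and D2: "\<And>t s. t \<in> Tset \<Longrightarrow> s \<in> Tset \<Longrightarrow>
       sqrt (\<integral>\<omega>. (X t \<omega> - X s \<omega>)^2 \<partial>M) \<le> Cbg * (max (fst t) (fst s)) powr \<beta> * (mdist t s) powr \<gamma>"
    and D3: "\<And>t. t \<in> Tset \<Longrightarrow> sqrt (\<integral>\<omega>. (X t \<omega>)^2 \<partial>M) \<le> Cd * (fst t) powr \<delta>"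
    and b: "0 < b" "b < b'" and C: "Cd \<le> Cd'" "0 < Cd'" "Cbg \<le> Cbg'" "0 < Cbg'"
    and th: "0 < \<theta>" "\<theta> < 1" and la: "lam > 0" and ka: "0 < \<kappa>" "\<kappa> < min 1 (2 * \<gamma>)"
  shows "(\<integral>\<^sup>+ \<omega>. (SUP t\<in>Tab a b. ennreal (exp (lam * \<bar>X t \<omega>\<bar>))) \<partial>M)
    \<le> ennreal (exp_sup_bound lam \<theta> \<kappa> \<beta> \<gamma> \<delta> b' Cd' Cbg')"
proof (rule separable_SUP_nn_integral_le[OF D1(2), where f = "\<lambda>x. exp (lam * \<bar>x\<bar>)"])
  show "X s \<in> borel_measurable M" if "s \<in> Tset" for s
    using gaussian_process_combination[OF D1(1) that that, of 1 0] by (simp add: centered_normal_rv_def)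
  show "continuous_on UNIV (\<lambda>x. exp (lam * \<bar>x\<bar>))" by (intro continuous_intros)
  show "Tab a b \<subseteq> Tset" by (auto simp: Tab_def)
  show "0 < b' - b" using b by simp
  show "s \<in> {s. fst s \<le> b'}" if "mdist s t < b' - b" "t \<in> Tab a b" for s t
    using that by (auto simp: Tab_def mdist_def)
  fix F assume F: "finite F" "F \<noteq> {}" "F \<subseteq> Tset \<inter> {s. fst s \<le> b'}"
  have fst: "0 \<le> fst t" "fst t \<le> b'" "t \<in> Tset" if "t \<in> F" for t
    using F(3) that by (auto simp: Tset_def)
  have "(\<integral>\<^sup>+\<omega>. (SUP t\<in>F. ennreal (exp (lam * \<bar>X t \<omega>\<bar>))) \<partial>M)
      \<le> 2 * ennreal (chaining_bound lam \<theta> \<kappa> \<gamma> (b' powr \<delta> * Cd') (Cbg' * b' powr \<beta> * b' powr \<gamma>))"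
  proof (rule finite_abs_exp_moment_le[OF P D1(1) F(1,2)])
    show "sqrt (\<integral>\<omega>. (X t \<omega>)^2 \<partial>M) \<le> b' powr \<delta> * Cd'" if "t \<in> F" for t
    proof -
      have "Cd * fst t powr \<delta> \<le> Cd' * b' powr \<delta>"
        using fst[OF that] pars C by (intro mult_mono powr_mono2) auto
      then show ?thesis using D3[OF fst(3)[OF that]] by (simp add: mult.commute)
    qed
    show "sqrt (\<integral>\<omega>. (X t \<omega> - X s \<omega>)^2 \<partial>M) \<le> Cbg' * b' powr \<beta> * mdist t s powr \<gamma>" if "t \<in> F" "s \<in> F" for t s
    proof -
      have "Cbg * max (fst t) (fst s) powr \<beta> \<le> Cbg' * b' powr \<beta>"
        using fst[OF that(1)] fst[OF that(2)] pars C by (intro mult_mono powr_mono2) auto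
      then have "Cbg * max (fst t) (fst s) powr \<beta> * mdist t s powr \<gamma> \<le> Cbg' * b' powr \<beta> * mdist t s powr \<gamma>"
        by (intro mult_right_mono) auto
      then show ?thesis using D2[OF fst(3)[OF that(1)] fst(3)[OF that(2)]] by linarith
    qed
  qed (use F fst pars b C th la ka in auto)
  also have "\<dots> = ennreal (exp_sup_bound lam \<theta> \<kappa> \<beta> \<gamma> \<delta> b' Cd' Cbg')"
  proof -
    have "2 * chaining_bound lam \<theta> \<kappa> \<gamma> (b' powr \<delta> * Cd') (Cbg' * b' powr \<beta> * b' powr \<gamma>)
        = exp_sup_bound lam \<theta> \<kappa> \<beta> \<gamma> \<delta> b' Cd' Cbg'"
      using b C pars th ka by (intro chaining_bound_eq_exp_sup_bound) auto
    then show ?thesis by (metis ennreal_mult' ennreal_numeral zero_le_numeral)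
  qed
  finally show "(\<integral>\<^sup>+\<omega>. (SUP t\<in>F. ennreal (exp (lam * \<bar>X t \<omega>\<bar>))) \<partial>M)
      \<le> ennreal (exp_sup_bound lam \<theta> \<kappa> \<beta> \<gamma> \<delta> b' Cd' Cbg')" .
qed

theorem theorem3p2:
  fixes M :: "'a measure" and X :: "real \<times> real \<Rightarrow> 'a \<Rightarrow> real"
    and \<beta> \<gamma> \<delta> Cbg Cd a b \<theta> lam \<kappa> :: real
  assumes "prob_space M"
    and D1: "centered_gaussian_process M Tset X" "separable_process M Tset mdist X"
    and pars: "\<beta> > 0" "\<gamma> > 0" "\<delta> > 0"
    and D2: "\<And>t s. t \<in> Tset \<Longrightarrow> s \<in> Tset \<Longrightarrow>
       sqrt (\<integral>\<omega>. (X t \<omega> - X s \<omega>)^2 \<partial>M)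
         \<le> Cbg * (max (fst t) (fst s)) powr \<beta> * (mdist t s) powr \<gamma>"
    and D3: "\<And>t. t \<in> Tset \<Longrightarrow> sqrt (\<integral>\<omega>. (X t \<omega>)^2 \<partial>M) \<le> Cd * (fst t) powr \<delta>"
    and ab: "0 \<le> a" "a < b"
    and th: "0 < \<theta>" "\<theta> < 1"
    and la: "lam > 0"
    and ka: "0 < \<kappa>" "\<kappa> < min 1 (2 * \<gamma>)"
  shows "(\<integral>\<^sup>+ \<omega>. (SUP t\<in>Tab a b. ennreal (exp (lam * \<bar>X t \<omega>\<bar>))) \<partial>M)
    \<le> ennreal (2 * exp (lam^2 * (b powr \<delta> * Cd)^2 / (2 * (1 - \<theta>)^2)
        + 2 * lam / (1 - \<theta>) * b powr (\<delta> + \<kappa> / 2 * (1 + \<beta> / \<gamma> - \<delta> / \<gamma>))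
          * ((2 powr ((1 - \<kappa>) / 2) / (1 - \<kappa> / (2 * \<gamma>))
               * Cd powr (1 - \<kappa> / (2 * \<gamma>)) * Cbg powr (\<kappa> / (2 * \<gamma>)))
             / (\<theta> powr (\<kappa> / (2 * \<gamma>)) * sqrt \<kappa>))))"
proof -
  have b: "b > 0" using ab by simp
  have C: "0 \<le> Cd" "0 \<le> Cbg" using moment_constants_nonneg[OF D2 D3 b] by auto
  have "(\<integral>\<^sup>+ \<omega>. (SUP t\<in>Tab a b. ennreal (exp (lam * \<bar>X t \<omega>\<bar>))) \<partial>M)
      \<le> ennreal (exp_sup_bound lam \<theta> \<kappa> \<beta> \<gamma> \<delta> b Cd Cbg)"
  proof (rule le_ennreal_limit_at_right)
    show "((\<lambda>\<eta>. exp_sup_bound lam \<theta> \<kappa> \<beta> \<gamma> \<delta> (b + \<eta>) (Cd + \<eta>) (Cbg + \<eta>))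
        \<longlongrightarrow> exp_sup_bound lam \<theta> \<kappa> \<beta> \<gamma> \<delta> b Cd Cbg) (at_right 0)"
      by (rule exp_sup_bound_continuous[OF b C th ka pars(2)])
    show "(\<integral>\<^sup>+ \<omega>. (SUP t\<in>Tab a b. ennreal (exp (lam * \<bar>X t \<omega>\<bar>))) \<partial>M)
        \<le> ennreal (exp_sup_bound lam \<theta> \<kappa> \<beta> \<gamma> \<delta> (b + \<eta>) (Cd + \<eta>) (Cbg + \<eta>))" if "\<eta> > 0" for \<eta>
      by (rule exp_sup_Tab_le[OF assms(1) D1 pars D2 D3 b]) (use that C th la ka in auto)
  qed
  then show ?thesis by (simp add: exp_sup_bound_def)
qed

end
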